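(* Let $\mathbf A=(A_n)\in\mathcal S_{\mathcal Y}({\sf BDO}(\Gamma))$ and let $h:\mathbb N\to\Gamma$ tend to infinity such that the limit operator $(\mathrm{Op}(\mathbf A)+P_{\Gamma'})_h$ exists. Suppose there is an integer $r\ge0$ such that for infinitely many $n$ there exists $k$ with $h(n)\in v_k(\partial_\Omega Y_k)^{-1}\Omega_r$. Then there exist a subsequence $g=(h(n_j))_{j\ge1}$ of $h$, a strictly increasing sequence $(k_j)_{j\ge1}$ of positive integers, elements $\eta_j\in(\partial_\Omega Y_{k_j})^{-1}$ and an element $w_*\in\Gamma$ such that $h(n_j)=v_{k_j}\eta_jw_*$ for all $j$, the limit operator $(P_{\Gamma'})_g$ exists, the strong limit $\mathrm{s\text{-}lim}_{j\to\infty}R_{w_*}^{-1}R_{\eta_j}^{-1}A_{k_j}P_{Y_{k_j}}R_{\eta_j}R_{w_*}$ exists, and \[(\mathrm{Op}(\mathbf A)+P_{\Gamma'})_h=\mathrm{s\text{-}lim}_{j\to\infty}R_{w_*}^{-1}R_{\eta_j}^{-1}A_{k_j}P_{Y_{k_j}}R_{\eta_j}R_{w_*}+(P_{\Gamma'})_g.\]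
   Context: $\Gamma$ is a countable discrete group with identity $e$. For $X\subseteq\Gamma$, $P_X$ is the orthogonal projection of $l^2(\Gamma)$ onto $l^2(X)$. For $r\in\Gamma$, $(L_ru)(t)=u(r^{-1}t)$ and $(R_ru)(t)=u(tr)$; $R_r^{-1}=R_{r^{-1}}$. ${\sf BDO}(\Gamma)$ is the smallest closed subalgebra of $L(l^2(\Gamma))$ containing all $L_r$ and all multiplication operators $aI$, $a\in l^\infty(\Gamma)$. $\Omega\subseteq\Gamma$ is finite, contains $e$, generates $\Gamma$ as a semigroup; $\Omega_0=\{e\}$, $\Omega_n$ = set of products of at most $n$ elements of $\Omega$. For $A\subseteq\Gamma$: $\mathrm{int}_\Omega A=\{a\in A:\Omega a\subseteq A\}$, $\partial_\Omega A=A\setminus\mathrm{int}_\Omega A$; products and inverses of sets are taken elementwise. $\mathcal Y=(Y_n)$ is an increasing sequence of finite subsets of $\Gamma$ with union $\Gamma$. $\mathcal F_{\mathcal Y}$ is the $C^*$-algebra of bounded sequences $(A_n)$ of operators on $\mathrm{im}\,P_{Y_n}$; $\mathcal S_{\mathcal Y}({\sf BDO}(\Gamma))$ is its smallest closed $C^*$-subalgebra containing all $(P_{Y_n}AP_{Y_n})$, $A\in{\sf BDO}(\Gamma)$. Fix a sequence $(v_n)$ in $\Gamma$ which is inflating for $Z_n:=(Y_n\cup\Omega_n)(Y_n\cup\Omega_n)^{-1}(Y_n\cup\Omega_n)$, i.e. $Z_mv_m^{-1}\cap Z_nv_n^{-1}=\emptyset$ for $m\neq n$. Put $\mathrm{Op}(\mathbf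 A):=\sum_nR_{v_n}A_nP_{Y_n}R_{v_n}^{-1}$ (strongly convergent) and $\Gamma':=\Gamma\setminus\bigcup_nY_nv_n^{-1}$. A sequence $h:\mathbb N\to\Gamma$ tends to infinity if for each finite $\Gamma_0\subseteq\Gamma$, $h(n)\notin\Gamma_0$ for all large $n$. For $B\in L(l^2(\Gamma))$, $B_h$ is the limit operator of $B$ with respect to $h$ if $R_{h(m)}^{-1}BR_{h(m)}\to B_h$ and $R_{h(m)}^{-1}B^*R_{h(m)}\to B_h^*$ strongly as $m\to\infty$. *)

theory Defs
  imports "HOL-Analysis.Analysis"
begin

text \<open>The group Gamma is a type of class group_add (written additively:
  product = +, inverse = uminus, identity = 0; commutativity is NOT assumed)
  and countable. Vectors of l2(Gamma) are functions Gamma => complex; an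
  operator is a map (Gamma => complex) => (Gamma => complex), only its
  behaviour on l2 matters.\<close>

type_synonym 'g vec = "'g \<Rightarrow> complex"
type_synonym 'g op = "'g vec \<Rightarrow> 'g vec"

definition L2 :: "'g vec set" where
  "L2 = {u. (\<lambda>t. (cmod (u t))\<^sup>2) summable_on UNIV}"

definition l2norm :: "'g vec \<Rightarrow> real" where
  "l2norm u = sqrt (infsum (\<lambda>t. (cmod (u t))\<^sup>2) UNIV)"

definition l2inner :: "'g vec \<Rightarrow> 'g vec \<Rightarrow> complex" where
  "l2inner u v = infsum (\<lambda>t. u t * cnj (v t)) UNIV"

definition bounded_op :: "'g op \<Rightarrow> bool" where
  "bounded_op B \<longleftrightarrow>
     (\<forall>u\<in>L2. B u \<in> L2) \<and>
     (\<forall>u\<in>L2. \<forall>v\<in>L2. \<forall>c::complex. B (\<lambda>t. u t + c * v t) = (\<lambda>t. B u t + c * B v t)) \<and>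
     (\<exists>K. \<forall>u\<in>L2. l2norm (B u) \<le> K * l2norm u)"

definition opnorm :: "'g op \<Rightarrow> real" where
  "opnorm B = Sup {l2norm (B u) | u. u \<in> L2 \<and> l2norm u \<le> 1}"

text \<open>Hilbert space adjoint (unique on l2 for bounded operators).\<close>
definition adj :: "'g op \<Rightarrow> 'g op" where
  "adj B = (SOME C. (\<forall>v\<in>L2. C v \<in> L2) \<and>
                    (\<forall>u\<in>L2. \<forall>v\<in>L2. l2inner (B u) v = l2inner u (C v)))"

definition strong_lim :: "(nat \<Rightarrow> 'g op) \<Rightarrow> 'g op \<Rightarrow> bool" where
  "strong_lim Bs B \<longleftrightarrow> (\<forall>u\<in>L2. (\<lambda>m. l2norm (\<lambda>t. Bs m u t - B u t)) \<longlonglongrightarrow> 0)"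

definition proj :: "'g set \<Rightarrow> 'g op" where
  "proj X u = (\<lambda>t. if t \<in> X then u t else 0)"

definition Lsh :: "'g::group_add \<Rightarrow> 'g op" where
  "Lsh r u = (\<lambda>t. u (- r + t))"

definition Rsh :: "'g::group_add \<Rightarrow> 'g op" where
  "Rsh r u = (\<lambda>t. u (t + r))"

definition mult_op :: "'g vec \<Rightarrow> 'g op" where
  "mult_op a u = (\<lambda>t. a t * u t)"

definition op_plus :: "'g op \<Rightarrow> 'g op \<Rightarrow> 'g op" where
  "op_plus A B u = (\<lambda>t. A u t + B u t)"

definition op_scale :: "complex \<Rightarrow> 'g op \<Rightarrow> 'g op" where
  "op_scale c A u = (\<lambda>t. c * A u t)"

definition op_minus :: "'g op \<Rightarrow> 'g op \<Rightarrow> 'g op" where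
  "op_minus A B u = (\<lambda>t. A u t - B u t)"

inductive_set BDO :: "('g::{group_add,countable}) op set" where
  shift: "Lsh r \<in> BDO"
| mult: "bdd_above (range (\<lambda>t. cmod (a t))) \<Longrightarrow> mult_op a \<in> BDO"
| plus: "A \<in> BDO \<Longrightarrow> B \<in> BDO \<Longrightarrow> op_plus A B \<in> BDO"
| scale: "A \<in> BDO \<Longrightarrow> op_scale c A \<in> BDO"
| comp: "A \<in> BDO \<Longrightarrow> B \<in> BDO \<Longrightarrow> A \<circ> B \<in> BDO"
| lim: "(\<And>k. As k \<in> BDO) \<Longrightarrow> bounded_op A \<Longrightarrow>
        (\<lambda>k. opnorm (op_minus (As k) A)) \<longlonglongrightarrow> 0 \<Longrightarrow> A \<in> BDO"

text \<open>Sequences are indexed by n = 1,2,3,... (index 0 is ignored).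
  A_n is an operator on im P_{Y_n}, represented as an operator B on l2(Gamma)
  with B = P_{Y_n} B P_{Y_n} on l2.\<close>

definition seqnorm :: "(nat \<Rightarrow> 'g op) \<Rightarrow> real" where
  "seqnorm X = (SUP n\<in>{1..}. opnorm (X n))"

definition FY :: "(nat \<Rightarrow> 'g set) \<Rightarrow> (nat \<Rightarrow> 'g op) set" where
  "FY Y = {X. (\<forall>n\<ge>1. bounded_op (X n) \<and>
                 (\<forall>u\<in>L2. X n u = proj (Y n) (X n (proj (Y n) u)))) \<and>
              bdd_above ((\<lambda>n. opnorm (X n)) ` {1..})}"

inductive_set SY :: "(nat \<Rightarrow> ('g::{group_add,countable}) set) \<Rightarrow> (nat \<Rightarrow> 'g op) set"
  for Y :: "nat \<Rightarrow> 'g set" where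
  gen: "A \<in> BDO \<Longrightarrow> (\<lambda>n. proj (Y n) \<circ> A \<circ> proj (Y n)) \<in> SY Y"
| plus: "X \<in> SY Y \<Longrightarrow> Z \<in> SY Y \<Longrightarrow> (\<lambda>n. op_plus (X n) (Z n)) \<in> SY Y"
| scale: "X \<in> SY Y \<Longrightarrow> (\<lambda>n. op_scale c (X n)) \<in> SY Y"
| comp: "X \<in> SY Y \<Longrightarrow> Z \<in> SY Y \<Longrightarrow> (\<lambda>n. X n \<circ> Z n) \<in> SY Y"
| adj: "X \<in> SY Y \<Longrightarrow> (\<lambda>n. adj (X n)) \<in> SY Y"
| lim: "(\<And>k. Xs k \<in> SY Y) \<Longrightarrow> X \<in> FY Y \<Longrightarrow>
        (\<lambda>k. seqnorm (\<lambda>n. op_minus (Xs k n) (X n))) \<longlonglongrightarrow> 0 \<Longrightarrow> X \<in> SY Y"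

definition setmul :: "'g::group_add set \<Rightarrow> 'g set \<Rightarrow> 'g set" where
  "setmul A B = {a + b | a b. a \<in> A \<and> b \<in> B}"

definition setinv :: "'g::group_add set \<Rightarrow> 'g set" where
  "setinv A = uminus ` A"

definition OmegaN :: "'g::group_add set \<Rightarrow> nat \<Rightarrow> 'g set" where
  "OmegaN \<Omega> n = {sum_list xs | xs. set xs \<subseteq> \<Omega> \<and> length xs \<le> n}"

definition int_Om :: "'g::group_add set \<Rightarrow> 'g set \<Rightarrow> 'g set" where
  "int_Om \<Omega> A = {a \<in> A. \<forall>w\<in>\<Omega>. w + a \<in> A}"

definition bd_Om :: "'g::group_add set \<Rightarrow> 'g set \<Rightarrow> 'g set" where
  "bd_Om \<Omega> A = A - int_Om \<Omega> A"

definition Zset :: "'g::group_add set \<Rightarrow> (nat \<Rightarrow> 'g set) \<Rightarrow> nat \<Rightarrow> 'g set" where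
  "Zset \<Omega> Y n = (let W = Y n \<union> OmegaN \<Omega> n in setmul (setmul W (setinv W)) W)"

text \<open>Op(A) = sum_{n>=1} R_{v_n} A_n P_{Y_n} R_{v_n}^{-1}; for inflating v the
  summands have pairwise disjoint supports, so the strong sum is the pointwise sum.\<close>
definition OpA :: "(nat \<Rightarrow> 'g::group_add set) \<Rightarrow> (nat \<Rightarrow> 'g) \<Rightarrow> (nat \<Rightarrow> 'g op) \<Rightarrow> 'g op" where
  "OpA Y v A u = (\<lambda>t. \<Sum>n. if n \<ge> 1 then Rsh (v n) (A n (proj (Y n) (Rsh (- v n) u))) t else 0)"

definition Gamma' :: "(nat \<Rightarrow> 'g::group_add set) \<Rightarrow> (nat \<Rightarrow> 'g) \<Rightarrow> 'g set" where
  "Gamma' Y v = UNIV - (\<Union>n\<in>{1..}. setmul (Y n) {- v n})"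

definition tends_to_inf :: "(nat \<Rightarrow> 'g) \<Rightarrow> bool" where
  "tends_to_inf h \<longleftrightarrow> (\<forall>G0. finite G0 \<longrightarrow> (\<forall>\<^sub>F n in sequentially. h n \<notin> G0))"

definition limop :: "'g::group_add op \<Rightarrow> (nat \<Rightarrow> 'g) \<Rightarrow> 'g op \<Rightarrow> bool" where
  "limop B h C \<longleftrightarrow>
     strong_lim (\<lambda>m. Rsh (- h m) \<circ> B \<circ> Rsh (h m)) C \<and>
     strong_lim (\<lambda>m. Rsh (- h m) \<circ> adj B \<circ> Rsh (h m)) (adj C)"

end

theory Submission
  imports Defs
begin

(* Write g_j for the subsequence of h along which
   h(n_j) = v_{k_j} eta_j w_*.  The operator Op(A) is a direct sum of the blocks
   R_{v_k} A_k P_{Y_k} R_{v_k}^{-1}, living on the pairwise disjoint regions Y_k v_k^{-1}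
   (disjoint because v is inflating).  Conjugating by R_{g_j}, the k_j-th block becomes
   R_{w_*}^{-1} R_{eta_j}^{-1} A_{k_j} P_{Y_{k_j}} R_{eta_j} R_{w_*}, and the remaining blocks
   only see the conjugated region G_j of all other blocks.  Because the Z_k v_k^{-1} are
   disjoint and w_* lies in Omega_k for large k, every fixed point eventually leaves G_j, so
   the remainder tends to zero strongly (dominated convergence in l^2).  Hence the
   conjugated blocks converge strongly to (Op(A) + P_Gamma')_h - (P_Gamma')_g, where a
   further subsequence, chosen by compactness of {0,1}^Gamma, makes (P_Gamma')_g exist. *)

abbreviation L2s :: "'g vec \<Rightarrow> 'g set \<Rightarrow> real" where
  "L2s u F \<equiv> L2_set (\<lambda>t. cmod (u t)) F"

lemma L2_set_sq: "(L2_set f F)^2 = (\<Sum>i\<in>F. (f i)^2)"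
  by (simp add: L2_set_def sum_nonneg)

lemma l2norm_nonneg: "0 \<le> l2norm u"
  unfolding l2norm_def by (simp add: infsum_nonneg)

lemma l2_fin_le:
  assumes "u \<in> L2" "finite F" shows "L2s u F \<le> l2norm u"
proof -
  have s: "(\<lambda>t. (cmod (u t))^2) summable_on UNIV" using assms by (simp add: L2_def)
  have "(\<Sum>t\<in>F. (cmod (u t))^2) \<le> infsum (\<lambda>t. (cmod (u t))^2) UNIV"
    by (rule finite_sum_le_infsum[OF s assms(2)]) auto
  then show ?thesis unfolding L2_set_def l2norm_def by (simp add: real_sqrt_le_mono)
qed

lemma l2_from_fin:
  assumes B: "0 \<le> B" and le: "\<And>F. finite F \<Longrightarrow> L2s u F \<le> B"
  shows "u \<in> L2 \<and> l2norm u \<le> B"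
proof -
  have le2: "(\<Sum>t\<in>F. (cmod (u t))^2) \<le> B^2" if "finite F" for F
  proof -
    have "(L2s u F)^2 \<le> B^2" using le[OF that] by (simp add: power_mono)
    then show ?thesis by (simp add: L2_set_sq)
  qed
  have bdd: "bdd_above (sum (\<lambda>t. (cmod (u t))^2) ` {F. F \<subseteq> UNIV \<and> finite F})"
    by (rule bdd_aboveI2[where M="B^2"]) (use le2 in auto)
  have sm: "(\<lambda>t. (cmod (u t))^2) summable_on UNIV"
    by (rule nonneg_bdd_above_summable_on) (use bdd in auto)
  have "infsum (\<lambda>t. (cmod (u t))^2) UNIV \<le> B^2"
    by (rule infsum_le_finite_sums[OF sm]) (use le2 in auto)
  then have "l2norm u \<le> sqrt (B^2)" unfolding l2norm_def by (rule real_sqrt_le_mono)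
  then have "l2norm u \<le> B" using B by simp
  with B sm show ?thesis by (simp add: L2_def)
qed

lemma L2s_subset: "finite H \<Longrightarrow> G \<subseteq> H \<Longrightarrow> L2s u G \<le> L2s u H"
  unfolding L2_set_def by (intro real_sqrt_le_mono sum_mono2) auto

lemma L2s_cong0: "finite H \<Longrightarrow> (\<And>t. t \<in> H - G \<Longrightarrow> u t = 0) \<Longrightarrow> G \<subseteq> H \<Longrightarrow> L2s u H = L2s u G"
  unfolding L2_set_def by (rule arg_cong[where f=sqrt], rule sum.mono_neutral_right) auto

lemma fin_supp_L2:
  assumes S: "finite S" and z: "\<And>t. t \<notin> S \<Longrightarrow> u t = 0"
  shows "u \<in> L2" and "l2norm u = L2s u S"
proof -
  have *: "u \<in> L2 \<and> l2norm u \<le> L2s u S"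
  proof (rule l2_from_fin)
    fix F :: "'a set" assume F: "finite F"
    have "L2s u F = L2s u (F \<inter> S)" by (rule L2s_cong0) (use F z in auto)
    also have "\<dots> \<le> L2s u S" by (rule L2s_subset) (use S in auto)
    finally show "L2s u F \<le> L2s u S" .
  qed simp
  then show "u \<in> L2" by simp
  show "l2norm u = L2s u S" using * l2_fin_le[OF _ S, of u] by simp
qed

lemma zero_L2[simp]: "(\<lambda>t. 0) \<in> L2" and l2norm_zero[simp]: "l2norm (\<lambda>t. 0) = 0"
  using fin_supp_L2[of "{}" "\<lambda>t. 0"] by auto

lemma l2_cmp:
  assumes "v \<in> L2" "\<And>t. cmod (u t) \<le> cmod (v t)"
  shows "u \<in> L2 \<and> l2norm u \<le> l2norm v"
proof (rule l2_from_fin[OF l2norm_nonneg])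
  fix F :: "'a set" assume F: "finite F"
  have "L2s u F \<le> L2s v F" by (rule L2_set_mono) (use assms in auto)
  also have "\<dots> \<le> l2norm v" by (rule l2_fin_le[OF assms(1) F])
  finally show "L2s u F \<le> l2norm v" .
qed

lemma l2_eq0:
  assumes "u \<in> L2" "l2norm u = 0" shows "u = (\<lambda>t. 0)"
proof
  fix t
  have "L2s u {t} \<le> 0" using l2_fin_le[OF assms(1), of "{t}"] assms(2) by simp
  then show "u t = 0" by simp
qed

lemma l2_triangle:
  assumes "u \<in> L2" "w \<in> L2"
  shows "(\<lambda>t. u t + w t) \<in> L2 \<and> l2norm (\<lambda>t. u t + w t) \<le> l2norm u + l2norm w"
proof (rule l2_from_fin)
  show "0 \<le> l2norm u + l2norm w" by (simp add: l2norm_nonneg)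
  fix F :: "'a set" assume F: "finite F"
  have "L2s (\<lambda>t. u t + w t) F \<le> L2_set (\<lambda>t. cmod (u t) + cmod (w t)) F"
    by (rule L2_set_mono) (auto simp: norm_triangle_ineq)
  also have "\<dots> \<le> L2s u F + L2s w F" by (rule L2_set_triangle_ineq)
  also have "\<dots> \<le> l2norm u + l2norm w" using l2_fin_le[OF assms(1) F] l2_fin_le[OF assms(2) F] by simp
  finally show "L2s (\<lambda>t. u t + w t) F \<le> l2norm u + l2norm w" .
qed

lemma l2_scale:
  assumes "u \<in> L2"
  shows "(\<lambda>t. c * u t) \<in> L2 \<and> l2norm (\<lambda>t. c * u t) \<le> cmod c * l2norm u"
proof (rule l2_from_fin)
  show "0 \<le> cmod c * l2norm u" by (simp add: l2norm_nonneg)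
  fix F :: "'a set" assume F: "finite F"
  have "L2s (\<lambda>t. c * u t) F = cmod c * L2s u F"
    by (simp add: L2_set_right_distrib norm_mult)
  also have "\<dots> \<le> cmod c * l2norm u" using l2_fin_le[OF assms F] by (simp add: mult_left_mono)
  finally show "L2s (\<lambda>t. c * u t) F \<le> cmod c * l2norm u" .
qed

lemma l2_diff:
  assumes "u \<in> L2" "w \<in> L2"
  shows "(\<lambda>t. u t - w t) \<in> L2 \<and> l2norm (\<lambda>t. u t - w t) \<le> l2norm u + l2norm w"
proof -
  have m: "(\<lambda>t. (-1) * w t) \<in> L2 \<and> l2norm (\<lambda>t. (-1) * w t) \<le> l2norm w"
    using l2_scale[OF assms(2), of "-1"] by simp
  then show ?thesis using l2_triangle[OF assms(1), of "\<lambda>t. (-1) * w t"] by simp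
qed

(* Norm bound for a - b - c which holds even if a is not known to be in l^2
   (then a - b - c is not in l^2 either and its "norm" is 0). *)
lemma l2_diff3:
  assumes b: "b \<in> L2" and c: "c \<in> L2"
  shows "l2norm (\<lambda>t. a t - b t - c t) \<le> l2norm a + l2norm b + l2norm c"
proof (cases "a \<in> L2")
  case True
  have "(\<lambda>t. a t - b t) \<in> L2 \<and> l2norm (\<lambda>t. a t - b t) \<le> l2norm a + l2norm b"
    by (rule l2_diff[OF True b])
  then show ?thesis using l2_diff[of "\<lambda>t. a t - b t" c] c by simp
next
  case False
  have "(\<lambda>t. a t - b t - c t) \<notin> L2"
  proof
    assume h: "(\<lambda>t. a t - b t - c t) \<in> L2"
    have "(\<lambda>t. (a t - b t - c t) + c t) \<in> L2" using l2_triangle[OF h c] by simp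
    then have "(\<lambda>t. a t - b t) \<in> L2" by simp
    then have "(\<lambda>t. (a t - b t) + b t) \<in> L2" using l2_triangle[OF _ b] by blast
    then show False using False by simp
  qed
  then have "l2norm (\<lambda>t. a t - b t - c t) = 0"
    unfolding l2norm_def L2_def by (simp add: infsum_not_exists)
  then show ?thesis by (simp add: l2norm_nonneg)
qed

lemma L2s_reindex:
  fixes r :: "'g::group_add"
  shows "L2s (Rsh r u) F = L2s u ((\<lambda>t. t + r) ` F)"
proof -
  have "inj_on (\<lambda>t. t + r) F" by (auto simp: inj_on_def)
  then show ?thesis unfolding L2_set_def Rsh_def by (simp add: sum.reindex)
qed

lemma l2_Rsh:
  fixes r :: "'g::group_add"
  assumes "u \<in> L2" shows "Rsh r u \<in> L2 \<and> l2norm (Rsh r u) \<le> l2norm u"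
proof (rule l2_from_fin[OF l2norm_nonneg])
  fix F :: "'g set" assume F: "finite F"
  show "L2s (Rsh r u) F \<le> l2norm u"
    unfolding L2s_reindex using l2_fin_le[OF assms] F by simp
qed

lemma l2_Rsh_eq:
  fixes r :: "'g::group_add"
  assumes "u \<in> L2" shows "l2norm (Rsh r u) = l2norm u"
proof -
  have "Rsh (-r) (Rsh r u) = u" by (simp add: Rsh_def add.assoc)
  then show ?thesis using l2_Rsh[OF assms, of r] l2_Rsh[of "Rsh r u" "-r"] by force
qed

lemma l2_Lsh:
  fixes r :: "'g::group_add"
  assumes "u \<in> L2" shows "Lsh r u \<in> L2 \<and> l2norm (Lsh r u) \<le> l2norm u"
proof (rule l2_from_fin[OF l2norm_nonneg])
  fix F :: "'g set" assume F: "finite F"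
  have "inj_on (\<lambda>t. -r + t) F" by (auto simp: inj_on_def)
  then have "L2s (Lsh r u) F = L2s u ((\<lambda>t. -r + t) ` F)"
    unfolding L2_set_def Lsh_def by (simp add: sum.reindex)
  then show "L2s (Lsh r u) F \<le> l2norm u" using l2_fin_le[OF assms] F by simp
qed

lemma l2_proj:
  assumes "u \<in> L2" shows "proj X u \<in> L2 \<and> l2norm (proj X u) \<le> l2norm u"
  by (rule l2_cmp[OF assms]) (simp add: proj_def)

lemma l2_tail:
  assumes u: "u \<in> L2" and e: "e > 0"
  shows "\<exists>F. finite F \<and> (\<forall>G. finite G \<longrightarrow> G \<inter> F = {} \<longrightarrow> L2s u G \<le> e)"
proof -
  define f where "f t = (cmod (u t))^2" for t
  have s: "f summable_on UNIV" using u by (simp add: L2_def f_def[abs_def])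
  have "(sum f \<longlongrightarrow> infsum f UNIV) (finite_subsets_at_top UNIV)" by (rule infsum_tendsto[OF s])
  then have "\<forall>\<^sub>F F in finite_subsets_at_top UNIV. dist (sum f F) (infsum f UNIV) < e^2"
    using e by (simp add: tendsto_iff)
  then have "\<exists>X. finite X \<and> X \<subseteq> UNIV \<and> (\<forall>Y. finite Y \<and> X \<subseteq> Y \<and> Y \<subseteq> UNIV \<longrightarrow> dist (sum f Y) (infsum f UNIV) < e^2)"
    by (simp only: eventually_finite_subsets_at_top)
  then obtain X where X: "finite X" and XP: "\<And>Y. finite Y \<Longrightarrow> X \<subseteq> Y \<Longrightarrow> dist (sum f Y) (infsum f UNIV) < e^2"
    by auto
  have le: "sum f Y \<le> infsum f UNIV" if "finite Y" for Y
    by (rule finite_sum_le_infsum[OF s that]) (auto simp: f_def)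
  show ?thesis
  proof (intro exI conjI allI impI)
    show "finite X" by fact
    fix G assume G: "finite G" "G \<inter> X = {}"
    have "sum f (X \<union> G) = sum f X + sum f G" using G X by (simp add: sum.union_disjoint inf_commute)
    moreover have "sum f (X \<union> G) \<le> infsum f UNIV" using le G X by simp
    moreover have "infsum f UNIV - sum f X < e^2" using XP[OF X] le[OF X] by (simp add: dist_real_def)
    ultimately have "sum f G \<le> e^2" by simp
    then have "sqrt (sum f G) \<le> sqrt (e^2)" by (rule real_sqrt_le_mono)
    then show "L2s u G \<le> e" using e by (simp add: L2_set_def f_def)
  qed
qed

lemma l2_dom_conv:
  assumes u: "u \<in> L2" and dom: "\<And>j t. cmod (d j t) \<le> cmod (u t)"
    and ev: "\<And>t. \<forall>\<^sub>F j in sequentially. d j t = 0"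
  shows "(\<lambda>j. l2norm (d j)) \<longlonglongrightarrow> 0"
proof (rule LIMSEQ_I)
  fix r :: real assume r: "0 < r"
  obtain F where F: "finite F" and FG: "\<And>G. finite G \<Longrightarrow> G \<inter> F = {} \<Longrightarrow> L2s u G \<le> r/2"
    using l2_tail[OF u, of "r/2"] r by auto
  have "\<forall>\<^sub>F j in sequentially. \<forall>t\<in>F. d j t = 0"
    using F ev by (simp add: eventually_ball_finite)
  then obtain N where N: "\<And>j. j \<ge> N \<Longrightarrow> \<forall>t\<in>F. d j t = 0"
    unfolding eventually_sequentially by blast
  show "\<exists>no. \<forall>n\<ge>no. norm (l2norm (d n) - 0) < r"
  proof (intro exI allI impI)
    fix j assume j: "j \<ge> N"
    have "d j \<in> L2 \<and> l2norm (d j) \<le> r/2"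
    proof (rule l2_from_fin)
      show "0 \<le> r/2" using r by simp
      fix H :: "'a set" assume H: "finite H"
      have "L2s (d j) H = L2s (d j) (H - F)" by (rule L2s_cong0) (use H N[OF j] in auto)
      also have "\<dots> \<le> L2s u (H - F)" by (rule L2_set_mono) (use dom in auto)
      also have "\<dots> \<le> r/2" using FG[of "H - F"] H by auto
      finally show "L2s (d j) H \<le> r/2" .
    qed
    then show "norm (l2norm (d j) - 0) < r" using r l2norm_nonneg[of "d j"] by simp
  qed
qed

lemma proj_escaping_tendsto_zero:
  assumes u: "u \<in> L2" and escape: "\<And>t. \<forall>\<^sub>F j in sequentially. t \<notin> G j"
  shows "(\<lambda>j. l2norm (proj (G j) u)) \<longlonglongrightarrow> 0"
proof (rule l2_dom_conv[OF u])
  fix j t show "cmod (proj (G j) u t) \<le> cmod (u t)" by (simp add: proj_def)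
next
  fix t show "\<forall>\<^sub>F j in sequentially. proj (G j) u t = 0"
    using escape[of t] by (rule eventually_mono) (simp add: proj_def)
qed

lemma l2_diff3_tendsto_zero:
  assumes b: "\<And>j. b j \<in> L2" and c: "\<And>j. c j \<in> L2"
    and "(\<lambda>j. l2norm (a j)) \<longlonglongrightarrow> 0" "(\<lambda>j. l2norm (b j)) \<longlonglongrightarrow> 0" "(\<lambda>j. l2norm (c j)) \<longlonglongrightarrow> 0"
  shows "(\<lambda>j. l2norm (\<lambda>t. a j t - b j t - c j t)) \<longlonglongrightarrow> 0"
proof -
  have "(\<lambda>j. l2norm (a j) + l2norm (b j) + l2norm (c j)) \<longlonglongrightarrow> 0 + 0 + 0"
    by (intro tendsto_add) fact+
  then have bound: "(\<lambda>j. l2norm (a j) + l2norm (b j) + l2norm (c j)) \<longlonglongrightarrow> 0" by simp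
  show ?thesis
    by (rule tendsto_sandwich[OF _ _ tendsto_const bound])
       (simp_all add: l2_diff3[OF b c] l2norm_nonneg)
qed

definition lin :: "'g op \<Rightarrow> bool" where
  "lin B \<longleftrightarrow> (\<forall>u\<in>L2. \<forall>v\<in>L2. \<forall>c::complex. B (\<lambda>t. u t + c * v t) = (\<lambda>t. B u t + c * B v t))"

lemma lin_app: "lin B \<Longrightarrow> u \<in> L2 \<Longrightarrow> v \<in> L2 \<Longrightarrow> B (\<lambda>t. u t + c * v t) = (\<lambda>t. B u t + c * B v t)"
  unfolding lin_def by blast

lemma lin_zero: "lin B \<Longrightarrow> B (\<lambda>t. 0) = (\<lambda>t. 0)"
proof -
  assume l: "lin B"
  have e: "B (\<lambda>t. 0 + 1 * 0) = (\<lambda>t. B (\<lambda>t. 0) t + 1 * B (\<lambda>t. 0) t)"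
    by (rule lin_app[OF l zero_L2 zero_L2])
  have "B (\<lambda>t. 0) t = B (\<lambda>t. 0) t + B (\<lambda>t. 0) t" for t using fun_cong[OF e, of t] by simp
  then show ?thesis by (intro ext) simp
qed

lemma lin_scale: "lin B \<Longrightarrow> u \<in> L2 \<Longrightarrow> B (\<lambda>t. c * u t) = (\<lambda>t. c * B u t)"
proof -
  assume l: "lin B" and u: "u \<in> L2"
  have "B (\<lambda>t. 0 + c * u t) = (\<lambda>t. B (\<lambda>t. 0) t + c * B u t)"
    by (rule lin_app[OF l zero_L2 u])
  then show ?thesis using lin_zero[OF l] by simp
qed

lemma bop_lin: "bounded_op B \<Longrightarrow> lin B"
  unfolding bounded_op_def lin_def by blast

lemma bop_L2: "bounded_op B \<Longrightarrow> u \<in> L2 \<Longrightarrow> B u \<in> L2"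
  unfolding bounded_op_def by blast

lemma bop_bound: "bounded_op B \<Longrightarrow> \<exists>K\<ge>0. \<forall>u\<in>L2. l2norm (B u) \<le> K * l2norm u"
proof -
  assume "bounded_op B"
  then obtain K where K: "\<forall>u\<in>L2. l2norm (B u) \<le> K * l2norm u" unfolding bounded_op_def by blast
  have "l2norm (B u) \<le> max K 0 * l2norm u" if u: "u \<in> L2" for u
  proof -
    have "l2norm (B u) \<le> K * l2norm u" using K u by blast
    also have "\<dots> \<le> max K 0 * l2norm u" by (rule mult_right_mono) (auto simp: l2norm_nonneg)
    finally show ?thesis .
  qed
  then show ?thesis by (intro exI[of _ "max K 0"]) auto
qed

lemma bopI:
  assumes "\<And>u. u \<in> L2 \<Longrightarrow> B u \<in> L2" "lin B" "K \<ge> 0" "\<And>u. u \<in> L2 \<Longrightarrow> l2norm (B u) \<le> K * l2norm u"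
  shows "bounded_op B"
  using assms unfolding bounded_op_def lin_def by blast

lemma bounded_op_Lsh: "bounded_op (Lsh r)"
proof (rule bopI[where K=1])
  show "lin (Lsh r)" by (simp add: lin_def Lsh_def)
qed (auto simp: l2_Lsh)

lemma bounded_op_mult:
  assumes "bdd_above (range (\<lambda>t. cmod (a t)))"
  shows "bounded_op (mult_op a)"
proof -
  obtain K where K: "\<And>t. cmod (a t) \<le> K" using assms by (auto simp: bdd_above_def)
  have K0: "0 \<le> K" using K[of undefined] norm_ge_zero order_trans by blast
  have main: "mult_op a u \<in> L2 \<and> l2norm (mult_op a u) \<le> K * l2norm u" if u: "u \<in> L2" for u
  proof (rule l2_from_fin)
    show "0 \<le> K * l2norm u" using K0 by (simp add: l2norm_nonneg)
    fix F :: "'a set" assume F: "finite F"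
    have "L2s (mult_op a u) F \<le> L2_set (\<lambda>t. K * cmod (u t)) F"
      by (rule L2_set_mono) (auto simp: mult_op_def norm_mult intro: mult_right_mono K)
    also have "\<dots> = K * L2s u F" by (simp add: L2_set_right_distrib K0)
    also have "\<dots> \<le> K * l2norm u" using l2_fin_le[OF u F] K0 by (simp add: mult_left_mono)
    finally show "L2s (mult_op a u) F \<le> K * l2norm u" .
  qed
  show ?thesis
  proof (rule bopI[where K=K])
    show "lin (mult_op a)" unfolding lin_def mult_op_def by (simp add: distrib_left mult.left_commute)
  qed (use main K0 in auto)
qed

lemma bounded_op_plus:
  assumes A: "bounded_op A" and B: "bounded_op B"
  shows "bounded_op (op_plus A B)"
proof -
  obtain K1 where K1: "K1 \<ge> 0" "\<forall>u\<in>L2. l2norm (A u) \<le> K1 * l2norm u" using bop_bound[OF A] by blast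
  obtain K2 where K2: "K2 \<ge> 0" "\<forall>u\<in>L2. l2norm (B u) \<le> K2 * l2norm u" using bop_bound[OF B] by blast
  show ?thesis
  proof (rule bopI[where K="K1+K2"])
    fix u :: "'a vec" assume u: "u \<in> L2"
    have t: "(\<lambda>t. A u t + B u t) \<in> L2 \<and> l2norm (\<lambda>t. A u t + B u t) \<le> l2norm (A u) + l2norm (B u)"
      by (rule l2_triangle) (use bop_L2 A B u in auto)
    then show "op_plus A B u \<in> L2" by (simp add: op_plus_def)
    have "l2norm (A u) \<le> K1 * l2norm u" "l2norm (B u) \<le> K2 * l2norm u" using K1 K2 u by auto
    then show "l2norm (op_plus A B u) \<le> (K1 + K2) * l2norm u"
      using t unfolding op_plus_def distrib_right by linarith
  next
    show "lin (op_plus A B)"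
      using bop_lin[OF A] bop_lin[OF B] unfolding lin_def op_plus_def
      by (simp add: distrib_left add.assoc add.left_commute)
  qed (use K1 K2 in simp)
qed

lemma bounded_op_scale:
  assumes A: "bounded_op A"
  shows "bounded_op (op_scale c A)"
proof -
  obtain K1 where K1: "K1 \<ge> 0" "\<forall>u\<in>L2. l2norm (A u) \<le> K1 * l2norm u" using bop_bound[OF A] by blast
  show ?thesis
  proof (rule bopI[where K="cmod c * K1"])
    fix u :: "'a vec" assume u: "u \<in> L2"
    have t: "(\<lambda>t. c * A u t) \<in> L2 \<and> l2norm (\<lambda>t. c * A u t) \<le> cmod c * l2norm (A u)"
      by (rule l2_scale) (use bop_L2 A u in auto)
    then show "op_scale c A u \<in> L2" by (simp add: op_scale_def)
    have "cmod c * l2norm (A u) \<le> cmod c * (K1 * l2norm u)" using K1 u by (simp add: mult_left_mono)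
    then show "l2norm (op_scale c A u) \<le> cmod c * K1 * l2norm u"
      using t by (simp add: op_scale_def)
  next
    show "lin (op_scale c A)"
      using bop_lin[OF A] unfolding lin_def op_scale_def
      by (simp add: distrib_left mult.left_commute)
  qed (use K1 in simp)
qed

lemma bounded_op_comp:
  assumes A: "bounded_op A" and B: "bounded_op B"
  shows "bounded_op (A \<circ> B)"
proof -
  obtain K1 where K1: "K1 \<ge> 0" "\<forall>u\<in>L2. l2norm (A u) \<le> K1 * l2norm u" using bop_bound[OF A] by blast
  obtain K2 where K2: "K2 \<ge> 0" "\<forall>u\<in>L2. l2norm (B u) \<le> K2 * l2norm u" using bop_bound[OF B] by blast
  show ?thesis
  proof (rule bopI[where K="K1*K2"])
    fix u :: "'a vec" assume u: "u \<in> L2"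
    have Bu: "B u \<in> L2" using bop_L2[OF B u] .
    then show "(A \<circ> B) u \<in> L2" using bop_L2[OF A] by simp
    have "l2norm (A (B u)) \<le> K1 * l2norm (B u)" using K1 Bu by blast
    also have "\<dots> \<le> K1 * (K2 * l2norm u)" using K2 u K1 by (simp add: mult_left_mono)
    finally show "l2norm ((A \<circ> B) u) \<le> K1 * K2 * l2norm u" by simp
  next
    show "lin (A \<circ> B)"
      using bop_lin[OF A] bop_lin[OF B] bop_L2[OF B] unfolding lin_def by simp
  qed (use K1 K2 in simp)
qed

lemma BDO_bop: "A \<in> BDO \<Longrightarrow> bounded_op A"
proof (induction rule: BDO.induct)
  case (comp A B)
  then show ?case using bounded_op_comp by blast
qed (auto intro: bounded_op_Lsh bounded_op_mult bounded_op_plus bounded_op_scale)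

lemma opnorm_bdd:
  assumes B: "bounded_op B"
  shows "bdd_above {l2norm (B u) | u. u \<in> L2 \<and> l2norm u \<le> 1}"
proof -
  obtain K where K: "K \<ge> 0" "\<forall>u\<in>L2. l2norm (B u) \<le> K * l2norm u" using bop_bound[OF B] by blast
  show ?thesis
  proof (rule bdd_aboveI[where M=K])
    fix x assume "x \<in> {l2norm (B u) | u. u \<in> L2 \<and> l2norm u \<le> 1}"
    then obtain w where w: "w \<in> L2" "l2norm w \<le> 1" and x: "x = l2norm (B w)" by blast
    have "l2norm (B w) \<le> K * l2norm w" using K w by blast
    also have "\<dots> \<le> K" using w K by (simp add: mult_left_le)
    finally show "x \<le> K" using x by simp
  qed
qed

lemma opnorm_bound:
  assumes B: "bounded_op B" and u: "u \<in> L2"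
  shows "l2norm (B u) \<le> opnorm B * l2norm u"
proof -
  have up: "l2norm (B w) \<le> opnorm B" if "w \<in> L2" "l2norm w \<le> 1" for w
    unfolding opnorm_def by (rule cSup_upper[OF _ opnorm_bdd[OF B]]) (use that in blast)
  have lB: "lin B" using bop_lin[OF B] .
  show ?thesis
  proof (cases "l2norm u = 0")
    case True
    then have "u = (\<lambda>t. 0)" using l2_eq0 u by blast
    then show ?thesis using lin_zero[OF lB] True by simp
  next
    case False
    define n where "n = l2norm u"
    have n: "n > 0" using False l2norm_nonneg[of u] by (simp add: n_def)
    define u' where "u' = (\<lambda>t. complex_of_real (1/n) * u t)"
    have u': "u' \<in> L2 \<and> l2norm u' \<le> cmod (complex_of_real (1/n)) * l2norm u"
      unfolding u'_def by (rule l2_scale[OF u])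
    then have "l2norm u' \<le> 1" using n by (simp add: n_def norm_divide)
    then have Bu'_le: "l2norm (B u') \<le> opnorm B" using up u' by blast
    have Bu': "B u' = (\<lambda>t. complex_of_real (1/n) * B u t)" unfolding u'_def by (rule lin_scale[OF lB u])
    have nn: "complex_of_real n * complex_of_real (1/n) = 1" using n by (simp flip: of_real_mult)
    have "B u = (\<lambda>t. complex_of_real n * B u' t)"
      unfolding Bu' mult.assoc[symmetric] nn by simp
    then have "l2norm (B u) \<le> cmod (complex_of_real n) * l2norm (B u')"
      using l2_scale[of "B u'" "complex_of_real n"] bop_L2[OF B] u' by simp
    also have "\<dots> \<le> n * opnorm B" using Bu'_le n by simp
    finally show ?thesis by (simp add: n_def mult.commute)
  qed
qed

lemma strong_lim_subseq:
  assumes "strong_lim Bs B" and "strict_mono r"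
  shows "strong_lim (\<lambda>j. Bs (r j)) B"
  using assms LIMSEQ_subseq_LIMSEQ[of _ 0 r] unfolding strong_lim_def by (auto simp: o_def)

(* window_op Y M B: B is linear, reads and writes only coordinates in Y, and has norm at
   most M.  Every component A_n of a sequence in S_Y(BDO) is of this kind, with M uniform in n. *)
definition window_op :: "'g set \<Rightarrow> real \<Rightarrow> 'g op \<Rightarrow> bool" where
  "window_op Y M B \<longleftrightarrow> lin B \<and> (\<forall>u\<in>L2. \<forall>t. t \<notin> Y \<longrightarrow> B u t = 0) \<and>
     (\<forall>u\<in>L2. B (proj Y u) = B u) \<and> (\<forall>u\<in>L2. l2norm (B u) \<le> M * l2norm u)"

definition delta :: "'g \<Rightarrow> 'g vec" where "delta s = (\<lambda>t. if s = t then 1 else 0)"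

lemma delta_L2[simp]: "delta s \<in> L2"
  by (rule fin_supp_L2(1)[of "{s}"]) (auto simp: delta_def)

lemma proj_lin: "proj Y (\<lambda>t. u t + c * v t) = (\<lambda>t. proj Y u t + c * proj Y v t)"
  by (auto simp: proj_def)

lemma proj_proj[simp]: "proj Y (proj Y u) = proj Y u"
  by (auto simp: proj_def)

lemma window_op_L2: "finite Y \<Longrightarrow> window_op Y M B \<Longrightarrow> u \<in> L2 \<Longrightarrow> B u \<in> L2"
  unfolding window_op_def by (intro fin_supp_L2(1)[of Y]) auto

lemma infsum_supp:
  fixes f :: "'a \<Rightarrow> complex"
  assumes "finite S" "\<And>t. t \<notin> S \<Longrightarrow> f t = 0"
  shows "infsum f UNIV = sum f S"
proof -
  have "infsum f UNIV = infsum f S" by (rule infsum_cong_neutral) (use assms in auto)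
  then show ?thesis using assms by simp
qed

lemma l2inner_supp:
  "finite S \<Longrightarrow> (\<And>t. t \<notin> S \<Longrightarrow> a t = 0) \<Longrightarrow> l2inner a b = (\<Sum>t\<in>S. a t * cnj (b t))"
  unfolding l2inner_def by (rule infsum_supp) auto

lemma l2inner_supp_right:
  "finite S \<Longrightarrow> (\<And>t. t \<notin> S \<Longrightarrow> b t = 0) \<Longrightarrow> l2inner a b = (\<Sum>t\<in>S. a t * cnj (b t))"
  unfolding l2inner_def by (rule infsum_supp) auto

lemma l2inner_delta: "l2inner (delta s) w = cnj (w s)"
  by (subst l2inner_supp[of "{s}"]) (auto simp: delta_def)

lemma lin_sum:
  assumes l: "lin X" and S: "finite S"
  shows "X (\<lambda>t. \<Sum>s\<in>S. c s * delta s t) = (\<lambda>t. \<Sum>s\<in>S. c s * X (delta s) t)"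
  using S
proof (induction S rule: finite_induct)
  case empty
  then show ?case using lin_zero[OF l] by simp
next
  case (insert a F)
  have w: "(\<lambda>t. \<Sum>s\<in>F. c s * delta s t) \<in> L2"
    by (rule fin_supp_L2(1)[OF insert(1)]) (auto simp: delta_def intro!: sum.neutral)
  have "X (\<lambda>t. \<Sum>s\<in>insert a F. c s * delta s t) = X (\<lambda>t. (\<Sum>s\<in>F. c s * delta s t) + c a * delta a t)"
    using insert by (simp add: add.commute)
  also have "\<dots> = (\<lambda>t. X (\<lambda>t. \<Sum>s\<in>F. c s * delta s t) t + c a * X (delta a) t)"
    by (rule lin_app[OF l w delta_L2])
  also have "\<dots> = (\<lambda>t. \<Sum>s\<in>insert a F. c s * X (delta s) t)"
    using insert by (simp add: add.commute)
  finally show ?case .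
qed

lemma proj_expand:
  assumes "finite Y" shows "proj Y u = (\<lambda>t. \<Sum>s\<in>Y. u s * delta s t)"
proof
  fix t
  have "(\<Sum>s\<in>Y. u s * delta s t) = (\<Sum>s\<in>Y. if s = t then u s else 0)"
    by (rule sum.cong) (auto simp: delta_def)
  also have "\<dots> = (if t \<in> Y then u t else 0)" by (rule sum.delta[OF assms])
  finally show "proj Y u t = (\<Sum>s\<in>Y. u s * delta s t)" by (simp add: proj_def)
qed

lemma window_op_gen:
  assumes A: "bounded_op A" and K: "0 \<le> K" "\<forall>u\<in>L2. l2norm (A u) \<le> K * l2norm u"
  shows "window_op Y K (proj Y \<circ> A \<circ> proj Y)"
  unfolding window_op_def
proof (intro conjI ballI allI impI)
  show "lin (proj Y \<circ> A \<circ> proj Y)" unfolding lin_def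
  proof (intro ballI allI)
    fix u v :: "'a vec" and c assume u: "u \<in> L2" and v: "v \<in> L2"
    have pu: "proj Y u \<in> L2" "proj Y v \<in> L2" using l2_proj u v by auto
    show "(proj Y \<circ> A \<circ> proj Y) (\<lambda>t. u t + c * v t) =
          (\<lambda>t. (proj Y \<circ> A \<circ> proj Y) u t + c * (proj Y \<circ> A \<circ> proj Y) v t)"
      by (simp add: proj_lin lin_app[OF bop_lin[OF A] pu])
  qed
next
  fix u :: "'a vec" and t assume "u \<in> L2" "t \<notin> Y"
  then show "(proj Y \<circ> A \<circ> proj Y) u t = 0" by (simp add: proj_def)
next
  fix u :: "'a vec" assume "u \<in> L2"
  show "(proj Y \<circ> A \<circ> proj Y) (proj Y u) = (proj Y \<circ> A \<circ> proj Y) u" by simp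
next
  fix u :: "'a vec" assume u: "u \<in> L2"
  have pu: "proj Y u \<in> L2 \<and> l2norm (proj Y u) \<le> l2norm u" using l2_proj[OF u] .
  have Apu: "A (proj Y u) \<in> L2" using bop_L2[OF A] pu by blast
  have "l2norm (proj Y (A (proj Y u))) \<le> l2norm (A (proj Y u))" using l2_proj[OF Apu] by blast
  also have "\<dots> \<le> K * l2norm (proj Y u)" using K pu by blast
  also have "\<dots> \<le> K * l2norm u" using pu K by (simp add: mult_left_mono)
  finally show "l2norm ((proj Y \<circ> A \<circ> proj Y) u) \<le> K * l2norm u" by simp
qed

lemma window_op_plus:
  assumes Y: "finite Y" and g1: "window_op Y M1 B1" and g2: "window_op Y M2 B2"
  shows "window_op Y (M1 + M2) (op_plus B1 B2)"
  unfolding window_op_def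
proof (intro conjI ballI allI impI)
  show "lin (op_plus B1 B2)"
    using g1 g2 unfolding window_op_def lin_def op_plus_def
    by (simp add: distrib_left add.assoc add.left_commute)
next
  fix u :: "'a vec" and t assume "u \<in> L2" "t \<notin> Y"
  then show "op_plus B1 B2 u t = 0" using g1 g2 by (simp add: op_plus_def window_op_def)
next
  fix u :: "'a vec" assume "u \<in> L2"
  then show "op_plus B1 B2 (proj Y u) = op_plus B1 B2 u" using g1 g2 by (simp add: op_plus_def window_op_def)
next
  fix u :: "'a vec" assume u: "u \<in> L2"
  have t: "(\<lambda>t. B1 u t + B2 u t) \<in> L2 \<and> l2norm (\<lambda>t. B1 u t + B2 u t) \<le> l2norm (B1 u) + l2norm (B2 u)"
    by (rule l2_triangle) (use window_op_L2[OF Y] g1 g2 u in auto)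
  have "l2norm (B1 u) \<le> M1 * l2norm u" "l2norm (B2 u) \<le> M2 * l2norm u" using g1 g2 u by (auto simp: window_op_def)
  then show "l2norm (op_plus B1 B2 u) \<le> (M1 + M2) * l2norm u"
    using t unfolding op_plus_def distrib_right by linarith
qed

lemma window_op_scale:
  assumes Y: "finite Y" and g1: "window_op Y M1 B1"
  shows "window_op Y (cmod c * M1) (op_scale c B1)"
  unfolding window_op_def
proof (intro conjI ballI allI impI)
  show "lin (op_scale c B1)"
    using g1 unfolding window_op_def lin_def op_scale_def
    by (simp add: distrib_left mult.left_commute)
next
  fix u :: "'a vec" and t assume "u \<in> L2" "t \<notin> Y"
  then show "op_scale c B1 u t = 0" using g1 by (simp add: op_scale_def window_op_def)
next
  fix u :: "'a vec" assume "u \<in> L2"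
  then show "op_scale c B1 (proj Y u) = op_scale c B1 u" using g1 by (simp add: op_scale_def window_op_def)
next
  fix u :: "'a vec" assume u: "u \<in> L2"
  have t: "(\<lambda>t. c * B1 u t) \<in> L2 \<and> l2norm (\<lambda>t. c * B1 u t) \<le> cmod c * l2norm (B1 u)"
    by (rule l2_scale) (use window_op_L2[OF Y] g1 u in auto)
  have "l2norm (B1 u) \<le> M1 * l2norm u" using g1 u by (auto simp: window_op_def)
  then have "cmod c * l2norm (B1 u) \<le> cmod c * (M1 * l2norm u)" by (simp add: mult_left_mono)
  then show "l2norm (op_scale c B1 u) \<le> cmod c * M1 * l2norm u"
    using t unfolding op_scale_def by simp
qed

lemma window_op_comp:
  assumes Y: "finite Y" and g1: "window_op Y M1 B1" and g2: "window_op Y M2 B2" and M1: "0 \<le> M1"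
  shows "window_op Y (M1 * M2) (B1 \<circ> B2)"
  unfolding window_op_def
proof (intro conjI ballI allI impI)
  have L: "\<And>u. u \<in> L2 \<Longrightarrow> B2 u \<in> L2" using window_op_L2[OF Y g2] .
  show "lin (B1 \<circ> B2)"
    using g1 g2 L unfolding window_op_def lin_def by simp
next
  fix u :: "'a vec" and t assume "u \<in> L2" "t \<notin> Y"
  then show "(B1 \<circ> B2) u t = 0" using g1 window_op_L2[OF Y g2] by (simp add: window_op_def)
next
  fix u :: "'a vec" assume "u \<in> L2"
  then show "(B1 \<circ> B2) (proj Y u) = (B1 \<circ> B2) u" using g2 by (simp add: window_op_def)
next
  fix u :: "'a vec" assume u: "u \<in> L2"
  have Bu: "B2 u \<in> L2" using window_op_L2[OF Y g2 u] .
  have "l2norm (B1 (B2 u)) \<le> M1 * l2norm (B2 u)" using g1 Bu by (auto simp: window_op_def)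
  also have "\<dots> \<le> M1 * (M2 * l2norm u)" using g2 u M1 by (auto simp: window_op_def intro: mult_left_mono)
  finally show "l2norm ((B1 \<circ> B2) u) \<le> M1 * M2 * l2norm u" by simp
qed

lemma adj_unique:
  assumes C: "\<And>v. v \<in> L2 \<Longrightarrow> C v \<in> L2"
    and adjoint: "\<And>u v. u \<in> L2 \<Longrightarrow> v \<in> L2 \<Longrightarrow> l2inner (B u) v = l2inner u (C v)"
    and v: "v \<in> L2"
  shows "adj B v = C v"
proof
  fix s
  have adj_B: "(\<forall>v\<in>L2. adj B v \<in> L2) \<and> (\<forall>u\<in>L2. \<forall>v\<in>L2. l2inner (B u) v = l2inner u (adj B v))"
    unfolding adj_def by (rule someI[where x=C]) (use C adjoint in auto)
  have "cnj (adj B v s) = l2inner (delta s) (adj B v)" by (simp add: l2inner_delta)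
  also have "\<dots> = l2inner (B (delta s)) v" using adj_B v by simp
  also have "\<dots> = l2inner (delta s) (C v)" using adjoint[OF delta_L2 v] .
  also have "\<dots> = cnj (C v s)" by (simp add: l2inner_delta)
  finally show "adj B v s = C v s" by simp
qed

lemma adj_proj:
  assumes v: "v \<in> L2" shows "adj (proj X) v = proj X v"
proof (rule adj_unique[OF _ _ v])
  show "l2inner (proj X a) b = l2inner a (proj X b)" for a b
    unfolding l2inner_def proj_def by (rule arg_cong[where f="\<lambda>f. infsum f UNIV"]) auto
qed (use l2_proj in blast)

(* Explicit adjoint of an operator on a finite window Y: the conjugate transposed matrix. *)
definition window_adjoint :: "'g set \<Rightarrow> 'g op \<Rightarrow> 'g op" where
  "window_adjoint Y X v = (\<lambda>s. if s \<in> Y then \<Sum>t\<in>Y. cnj (X (delta s) t) * v t else 0)"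

lemma window_adjoint_L2: "finite Y \<Longrightarrow> window_adjoint Y X v \<in> L2"
  by (rule fin_supp_L2(1)) (auto simp: window_adjoint_def)

lemma window_adjoint_inner:
  assumes Y: "finite Y" and X: "window_op Y M X" and u: "u \<in> L2" and v: "v \<in> L2"
  shows "l2inner (X u) v = l2inner u (window_adjoint Y X v)"
proof -
  have expand: "X u = (\<lambda>t. \<Sum>s\<in>Y. u s * X (delta s) t)"
  proof -
    have "X u = X (proj Y u)" using X u by (simp add: window_op_def)
    also have "\<dots> = X (\<lambda>t. \<Sum>s\<in>Y. u s * delta s t)" by (simp add: proj_expand[OF Y])
    also have "\<dots> = (\<lambda>t. \<Sum>s\<in>Y. u s * X (delta s) t)"
      using X by (intro lin_sum[OF _ Y]) (simp add: window_op_def)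
    finally show ?thesis .
  qed
  have "l2inner (X u) v = (\<Sum>t\<in>Y. X u t * cnj (v t))"
    by (rule l2inner_supp[OF Y]) (use X u in \<open>auto simp: window_op_def\<close>)
  also have "\<dots> = (\<Sum>t\<in>Y. \<Sum>s\<in>Y. u s * X (delta s) t * cnj (v t))"
    by (simp add: expand sum_distrib_right)
  also have "\<dots> = (\<Sum>s\<in>Y. \<Sum>t\<in>Y. u s * X (delta s) t * cnj (v t))"
    by (rule sum.swap)
  also have "\<dots> = (\<Sum>s\<in>Y. u s * cnj (window_adjoint Y X v s))"
    by (rule sum.cong) (auto simp: window_adjoint_def sum_distrib_left mult.assoc)
  also have "\<dots> = l2inner u (window_adjoint Y X v)"
    by (rule l2inner_supp_right[OF Y, symmetric]) (auto simp: window_adjoint_def)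
  finally show ?thesis .
qed

(* Cauchy-Schwarz: with a the adjoint applied to v,
   |a|^2 = <X a, v> <= |X a| |v| <= M |a| |v|. *)
lemma window_adjoint_bound:
  assumes Y: "finite Y" and X: "window_op Y M X" and M0: "0 \<le> M" and v: "v \<in> L2"
  shows "l2norm (window_adjoint Y X v) \<le> M * l2norm v"
proof -
  define a where "a = window_adjoint Y X v"
  have aL: "a \<in> L2" using window_adjoint_L2[OF Y] by (simp add: a_def)
  have XaL: "X a \<in> L2" using window_op_L2[OF Y X aL] .
  have na: "l2norm a = L2s a Y" by (rule fin_supp_L2(2)[OF Y]) (auto simp: a_def window_adjoint_def)
  have "complex_of_real ((l2norm a)^2) = (\<Sum>s\<in>Y. complex_of_real ((cmod (a s))^2))"
    by (simp add: na L2_set_sq)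
  also have "\<dots> = (\<Sum>s\<in>Y. a s * cnj (a s))" by (rule sum.cong[OF refl], rule complex_norm_square)
  also have "\<dots> = l2inner a a"
    by (rule l2inner_supp[OF Y, symmetric]) (auto simp: a_def window_adjoint_def)
  also have "\<dots> = l2inner (X a) v" using window_adjoint_inner[OF Y X aL v] by (simp add: a_def)
  also have "\<dots> = (\<Sum>t\<in>Y. X a t * cnj (v t))"
    by (rule l2inner_supp[OF Y]) (use X aL in \<open>auto simp: window_op_def\<close>)
  finally have e: "complex_of_real ((l2norm a)^2) = (\<Sum>t\<in>Y. X a t * cnj (v t))" .
  have "(l2norm a)^2 = cmod (complex_of_real ((l2norm a)^2))" by (simp only: norm_of_real) simp
  also have "\<dots> \<le> (\<Sum>t\<in>Y. \<bar>cmod (X a t)\<bar> * \<bar>cmod (v t)\<bar>)" unfolding e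
    by (rule order_trans[OF norm_sum]) (simp add: norm_mult)
  also have "\<dots> \<le> L2s (X a) Y * L2s v Y" by (rule L2_set_mult_ineq)
  also have "\<dots> \<le> l2norm (X a) * l2norm v"
    by (rule mult_mono) (use l2_fin_le[OF XaL Y] l2_fin_le[OF v Y] l2norm_nonneg in auto)
  also have "\<dots> \<le> (M * l2norm a) * l2norm v"
    by (rule mult_right_mono) (use X aL l2norm_nonneg in \<open>auto simp: window_op_def\<close>)
  finally have sq: "l2norm a * l2norm a \<le> (M * l2norm v) * l2norm a"
    by (simp add: power2_eq_square mult_ac)
  show ?thesis
  proof (cases "l2norm a = 0")
    case True then show ?thesis using M0 l2norm_nonneg[of v] by (simp add: a_def)
  next
    case False
    then have "l2norm a > 0" using l2norm_nonneg[of a] by simp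
    with sq show ?thesis by (simp add: mult_le_cancel_right_pos a_def)
  qed
qed

lemma window_op_adj:
  assumes Y: "finite Y" and X: "window_op Y M X" and M0: "0 \<le> M"
  shows "window_op Y M (adj X)"
proof -
  have eq: "adj X v = window_adjoint Y X v" if v: "v \<in> L2" for v
    by (rule adj_unique[OF window_adjoint_L2[OF Y] window_adjoint_inner[OF Y X] v])
  show ?thesis unfolding window_op_def
  proof (intro conjI ballI allI impI)
    show "lin (adj X)" unfolding lin_def
    proof (intro ballI allI)
      fix u v :: "'a vec" and c assume u: "u \<in> L2" and v: "v \<in> L2"
      have "(\<lambda>t. u t + c * v t) \<in> L2" using l2_scale[OF v] l2_triangle[OF u] by blast
      then show "adj X (\<lambda>t. u t + c * v t) = (\<lambda>t. adj X u t + c * adj X v t)"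
        using eq u v
        by (auto simp: window_adjoint_def distrib_left sum.distrib sum_distrib_left mult.left_commute)
    qed
  next
    fix u :: "'a vec" and t assume "u \<in> L2" "t \<notin> Y"
    then show "adj X u t = 0" using eq by (simp add: window_adjoint_def)
  next
    fix u :: "'a vec" assume u: "u \<in> L2"
    have "proj Y u \<in> L2" using l2_proj[OF u] by blast
    moreover have "window_adjoint Y X (proj Y u) = window_adjoint Y X u"
      by (auto simp: window_adjoint_def proj_def intro!: sum.cong)
    ultimately show "adj X (proj Y u) = adj X u" using eq u by simp
  next
    fix u :: "'a vec" assume u: "u \<in> L2"
    then show "l2norm (adj X u) \<le> M * l2norm u" using eq window_adjoint_bound[OF Y X M0] by simp
  qed
qed

lemma FY_window_op:
  assumes X: "X \<in> FY Y"
  shows "\<exists>M\<ge>0. \<forall>n\<ge>1. window_op (Y n) M (X n)"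
proof -
  have bo: "\<And>n. n \<ge> 1 \<Longrightarrow> bounded_op (X n)"
    and pr: "\<And>n u. n \<ge> 1 \<Longrightarrow> u \<in> L2 \<Longrightarrow> X n u = proj (Y n) (X n (proj (Y n) u))"
    and bdd: "bdd_above ((\<lambda>n. opnorm (X n)) ` {1..})"
    using X unfolding FY_def by auto
  obtain M0 where M0: "\<And>n. n \<ge> 1 \<Longrightarrow> opnorm (X n) \<le> M0"
    using bdd unfolding bdd_above_def by auto
  have "window_op (Y n) (max M0 0) (X n)" if n: "n \<ge> 1" for n
    unfolding window_op_def
  proof (intro conjI ballI allI impI)
    show "lin (X n)" using bop_lin[OF bo[OF n]] .
  next
    fix u :: "'a vec" and t assume "u \<in> L2" "t \<notin> Y n"
    then show "X n u t = 0" using pr[OF n] by (metis proj_def)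
  next
    fix u :: "'a vec" assume u: "u \<in> L2"
    have pu: "proj (Y n) u \<in> L2" using l2_proj[OF u] by blast
    show "X n (proj (Y n) u) = X n u" using pr[OF n pu] pr[OF n u] by simp
  next
    fix u :: "'a vec" assume u: "u \<in> L2"
    have "l2norm (X n u) \<le> opnorm (X n) * l2norm u" by (rule opnorm_bound[OF bo[OF n] u])
    also have "\<dots> \<le> max M0 0 * l2norm u" using M0[OF n] by (intro mult_right_mono) (auto simp: l2norm_nonneg)
    finally show "l2norm (X n u) \<le> max M0 0 * l2norm u" .
  qed
  then show ?thesis by (intro exI[of _ "max M0 0"]) auto
qed

lemma SY_window_op:
  assumes Yf: "\<forall>n\<ge>1. finite (Y n)"
  shows "X \<in> SY Y \<Longrightarrow> \<exists>M\<ge>0. \<forall>n\<ge>1. window_op (Y n) M (X n)"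
proof (induction rule: SY.induct)
  case (gen A)
  have A: "bounded_op A" using BDO_bop[OF gen] .
  obtain K where K: "K \<ge> 0" "\<forall>u\<in>L2. l2norm (A u) \<le> K * l2norm u" using bop_bound[OF A] by blast
  show ?case using window_op_gen[OF A K] K by blast
next
  case (plus X Z)
  then obtain M1 M2 where "M1 \<ge> 0" "\<forall>n\<ge>1. window_op (Y n) M1 (X n)" "M2 \<ge> 0" "\<forall>n\<ge>1. window_op (Y n) M2 (Z n)" by blast
  then show ?case using Yf by (intro exI[of _ "M1+M2"]) (auto intro!: window_op_plus)
next
  case (scale X c)
  then obtain M1 where "M1 \<ge> 0" "\<forall>n\<ge>1. window_op (Y n) M1 (X n)" by blast
  then show ?case using Yf by (intro exI[of _ "cmod c * M1"]) (auto intro!: window_op_scale)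
next
  case (comp X Z)
  then obtain M1 M2 where "M1 \<ge> 0" "\<forall>n\<ge>1. window_op (Y n) M1 (X n)" "M2 \<ge> 0" "\<forall>n\<ge>1. window_op (Y n) M2 (Z n)" by blast
  then have "window_op (Y n) (M1*M2) (\<lambda>a. X n (Z n a))" if "n \<ge> 1" for n
    using Yf that window_op_comp[of "Y n" M1 "X n" M2 "Z n"] by (simp add: comp_def)
  then show ?case using \<open>M1 \<ge> 0\<close> \<open>M2 \<ge> 0\<close> by (intro exI[of _ "M1*M2"]) auto
next
  case (adj X)
  then obtain M1 where "M1 \<ge> 0" "\<forall>n\<ge>1. window_op (Y n) M1 (X n)" by blast
  then show ?case using Yf by (intro exI[of _ M1]) (auto intro!: window_op_adj)
next
  case (lim Xs X)
  then show ?case using FY_window_op by blast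
qed

definition block_region :: "(nat \<Rightarrow> 'g::group_add set) \<Rightarrow> (nat \<Rightarrow> 'g) \<Rightarrow> nat \<Rightarrow> 'g set" where
  "block_region Y v n = {t. t + v n \<in> Y n}"

definition block_op :: "(nat \<Rightarrow> 'g::group_add set) \<Rightarrow> (nat \<Rightarrow> 'g) \<Rightarrow> (nat \<Rightarrow> 'g op) \<Rightarrow> nat \<Rightarrow> 'g op" where
  "block_op Y v A n x = Rsh (v n) (A n (proj (Y n) (Rsh (- v n) x)))"

lemma Rsh_Rsh: "Rsh a (Rsh b u) = Rsh (a + b) u"
  by (simp add: Rsh_def add.assoc)

lemma Rsh_zero_fun[simp]: "Rsh a (\<lambda>t. 0) = (\<lambda>t. 0)"
  by (simp add: Rsh_def)

lemma block_region_image: "block_region Y v n = (\<lambda>t. t + - v n) ` Y n"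
proof
  show "block_region Y v n \<subseteq> (\<lambda>t. t + - v n) ` Y n"
  proof
    fix t assume "t \<in> block_region Y v n"
    then have "t + v n \<in> Y n" by (simp add: block_region_def)
    moreover have "t = (t + v n) + - v n" by (simp add: add.assoc)
    ultimately show "t \<in> (\<lambda>t. t + - v n) ` Y n" by blast
  qed
  show "(\<lambda>t. t + - v n) ` Y n \<subseteq> block_region Y v n" by (auto simp: block_region_def add.assoc)
qed

definition other_regions :: "(nat \<Rightarrow> 'g::group_add set) \<Rightarrow> (nat \<Rightarrow> 'g) \<Rightarrow> nat \<Rightarrow> 'g set" where
  "other_regions Y v k = (\<Union>n\<in>{n. n \<ge> 1 \<and> n \<noteq> k}. block_region Y v n)"

locale block_setting =
  fixes Y :: "nat \<Rightarrow> 'g::group_add set" and v :: "nat \<Rightarrow> 'g" and A :: "nat \<Rightarrow> 'g op" and M :: real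
  assumes Yf: "\<And>n. n \<ge> 1 \<Longrightarrow> finite (Y n)"
    and regions_disjoint: "\<And>m n. m \<ge> 1 \<Longrightarrow> n \<ge> 1 \<Longrightarrow> m \<noteq> n \<Longrightarrow> block_region Y v m \<inter> block_region Y v n = {}"
    and blocks_window: "\<And>n. n \<ge> 1 \<Longrightarrow> window_op (Y n) M (A n)"
    and M0: "0 \<le> M"
begin

abbreviation "R \<equiv> block_region Y v"
abbreviation "B \<equiv> block_op Y v A"

lemma finite_block_region: "n \<ge> 1 \<Longrightarrow> finite (R n)"
  unfolding block_region_image using Yf by simp

lemma proj_window_L2: "n \<ge> 1 \<Longrightarrow> proj (Y n) x \<in> L2"
  by (rule fin_supp_L2(1)[OF Yf]) (auto simp: proj_def)

lemma block_op_supp: "n \<ge> 1 \<Longrightarrow> t \<notin> R n \<Longrightarrow> B n x t = 0"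
  using blocks_window proj_window_L2 unfolding block_op_def window_op_def block_region_def Rsh_def by blast

lemma block_op_local:
  assumes n: "n \<ge> 1" and eq: "\<And>s. s \<in> R n \<Longrightarrow> x s = x' s"
  shows "B n x = B n x'"
proof -
  have "proj (Y n) (Rsh (- v n) x) = proj (Y n) (Rsh (- v n) x')"
  proof
    fix s
    show "proj (Y n) (Rsh (- v n) x) s = proj (Y n) (Rsh (- v n) x') s"
    proof (cases "s \<in> Y n")
      case True
      then have "s + - v n \<in> R n" by (simp add: block_region_def add.assoc)
      then show ?thesis using eq True by (simp add: proj_def Rsh_def)
    qed (simp add: proj_def)
  qed
  then show ?thesis by (simp add: block_op_def)
qed

lemma block_op_zero:
  assumes n: "n \<ge> 1" and z: "\<And>s. s \<in> R n \<Longrightarrow> x s = 0"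
  shows "B n x = (\<lambda>t. 0)"
proof -
  have "B n x = B n (\<lambda>t. 0)" by (rule block_op_local[OF n]) (use z in auto)
  also have "\<dots> = (\<lambda>t. 0)"
  proof -
    have "proj (Y n) (Rsh (- v n) (\<lambda>t. 0)) = (\<lambda>t. 0)" by (simp add: proj_def)
    moreover have "A n (\<lambda>t. 0) = (\<lambda>t. 0)" using lin_zero[of "A n"] blocks_window[OF n] by (simp add: window_op_def)
    ultimately show ?thesis by (simp add: block_op_def)
  qed
  finally show ?thesis .
qed

lemma OpA_block_sum: "OpA Y v A x t = (\<Sum>m. if m \<ge> 1 then B m x t else 0)"
  by (simp only: OpA_def block_op_def)

lemma OpA_at:
  assumes n: "n \<ge> 1" and t: "t \<in> R n"
  shows "OpA Y v A x t = B n x t"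
proof -
  have "(\<Sum>m. if m \<ge> 1 then B m x t else 0) = (\<Sum>m\<in>{n}. if m \<ge> 1 then B m x t else 0)"
  proof (rule suminf_finite)
    fix m assume "m \<notin> {n}"
    then have "m \<noteq> n" by simp
    show "(if m \<ge> 1 then B m x t else 0) = 0"
    proof (cases "m \<ge> 1")
      case True
      then have "t \<notin> R m" using regions_disjoint[OF True n \<open>m \<noteq> n\<close>] t by blast
      then show ?thesis using block_op_supp[OF True] True by simp
    qed simp
  qed simp
  then show ?thesis using n by (simp add: OpA_block_sum)
qed

lemma OpA_out:
  assumes "\<And>n. n \<ge> 1 \<Longrightarrow> t \<notin> R n"
  shows "OpA Y v A x t = 0"
proof -
  have "(\<Sum>m. if m \<ge> 1 then B m x t else 0) = (\<Sum>m\<in>{}. if m \<ge> 1 then B m x t else 0)"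
    by (rule suminf_finite) (use assms block_op_supp in auto)
  then show ?thesis by (simp add: OpA_block_sum)
qed

lemma block_op_norm:
  assumes n: "n \<ge> 1"
  shows "L2s (B n x) (R n) \<le> M * L2s x (R n)"
proof -
  define z where "z = proj (Y n) (Rsh (- v n) x)"
  have zL: "z \<in> L2" unfolding z_def by (rule proj_window_L2[OF n])
  have nz: "l2norm z = L2s z (Y n)" by (rule fin_supp_L2(2)[OF Yf[OF n]]) (auto simp: z_def proj_def)
  have "L2s z (Y n) = L2s (Rsh (- v n) x) (Y n)" by (rule L2_set_cong) (auto simp: z_def proj_def)
  also have "\<dots> = L2s x (R n)" by (simp add: L2s_reindex block_region_image)
  finally have nz': "l2norm z = L2s x (R n)" using nz by simp
  have AzL: "A n z \<in> L2" using window_op_L2[OF Yf[OF n] blocks_window[OF n] zL] .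
  have "L2s (B n x) (R n) \<le> l2norm (B n x)"
    by (rule l2_fin_le[OF _ finite_block_region[OF n]]) (use l2_Rsh[OF AzL] in \<open>simp add: block_op_def z_def\<close>)
  also have "\<dots> = l2norm (A n z)" using l2_Rsh_eq[OF AzL] by (simp add: block_op_def z_def)
  also have "\<dots> \<le> M * l2norm z" using blocks_window[OF n] zL by (simp add: window_op_def)
  finally show ?thesis using nz' by simp
qed

lemma finite_blocks_meeting:
  assumes F: "finite F"
  shows "finite {n. n \<ge> 1 \<and> R n \<inter> F \<noteq> {}}"
proof -
  have sub: "{n. n \<ge> 1 \<and> R n \<inter> F \<noteq> {}} \<subseteq> (\<Union>t\<in>F. {n. n \<ge> 1 \<and> t \<in> R n})" by blast
  have fin: "finite {n. n \<ge> 1 \<and> t \<in> R n}" for t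
  proof (cases "\<exists>n. n \<ge> 1 \<and> t \<in> R n")
    case True
    then obtain n0 where n0: "n0 \<ge> 1" "t \<in> R n0" by blast
    have "{n. n \<ge> 1 \<and> t \<in> R n} \<subseteq> {n0}" using regions_disjoint n0 by blast
    then show ?thesis using finite_subset by blast
  next
    case False
    then have "{n. n \<ge> 1 \<and> t \<in> R n} = {}" by auto
    then show ?thesis by (metis finite.emptyI)
  qed
  show ?thesis by (rule finite_subset[OF sub]) (use F fin in blast)
qed

lemma OpA_partial_sum:
  assumes F: "finite F"
  defines "N \<equiv> {n. n \<ge> 1 \<and> R n \<inter> F \<noteq> {}}"
  shows "(\<Sum>t\<in>F. (cmod (OpA Y v A x t))^2) \<le> (\<Sum>n\<in>N. (L2s (B n x) (R n))^2)"
proof -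
  have N: "finite N" unfolding N_def by (rule finite_blocks_meeting[OF F])
  have N1: "n \<in> N \<Longrightarrow> n \<ge> 1" for n by (simp add: N_def)
  have djN: "\<forall>i\<in>N. \<forall>j\<in>N. i \<noteq> j \<longrightarrow> (F \<inter> R i) \<inter> (F \<inter> R j) = {}" using regions_disjoint N1 by blast
  let ?f = "\<lambda>t. (cmod (OpA Y v A x t))^2"
  have "(\<Sum>t\<in>F. ?f t) = (\<Sum>t\<in>(\<Union>n\<in>N. F \<inter> R n). ?f t)"
  proof (rule sum.mono_neutral_right[OF F])
    show "\<forall>t\<in>F - (\<Union>n\<in>N. F \<inter> R n). ?f t = 0"
    proof
      fix t assume t: "t \<in> F - (\<Union>n\<in>N. F \<inter> R n)"
      have "t \<notin> R n" if "n \<ge> 1" for n using t that by (auto simp: N_def)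
      then show "?f t = 0" using OpA_out by simp
    qed
  qed blast
  also have "\<dots> = (\<Sum>n\<in>N. \<Sum>t\<in>F \<inter> R n. ?f t)"
    by (rule sum.UNION_disjoint[OF N]) (use F djN in auto)
  also have "\<dots> = (\<Sum>n\<in>N. \<Sum>t\<in>F \<inter> R n. (cmod (B n x t))^2)"
  proof (intro sum.cong refl)
    fix n t assume "n \<in> N" "t \<in> F \<inter> R n"
    then show "?f t = (cmod (B n x t))^2" using OpA_at[OF N1[of n], of t x] by simp
  qed
  also have "\<dots> \<le> (\<Sum>n\<in>N. \<Sum>t\<in>R n. (cmod (B n x t))^2)"
    by (rule sum_mono, rule sum_mono2) (use finite_block_region N1 in auto)
  also have "\<dots> = (\<Sum>n\<in>N. (L2s (B n x) (R n))^2)" by (simp add: L2_set_sq)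
  finally show ?thesis .
qed

(* Op(A) is bounded by the common block bound M (orthogonality of the blocks). *)
lemma OpA_bound:
  assumes x: "x \<in> L2"
  shows "OpA Y v A x \<in> L2 \<and> l2norm (OpA Y v A x) \<le> M * l2norm x"
proof (rule l2_from_fin)
  show "0 \<le> M * l2norm x" using M0 by (simp add: l2norm_nonneg)
  fix F :: "'g set" assume F: "finite F"
  define N where "N = {n. n \<ge> 1 \<and> R n \<inter> F \<noteq> {}}"
  have N: "finite N" unfolding N_def by (rule finite_blocks_meeting[OF F])
  have N1: "n \<in> N \<Longrightarrow> n \<ge> 1" for n by (simp add: N_def)
  have djN: "\<forall>i\<in>N. \<forall>j\<in>N. i \<noteq> j \<longrightarrow> R i \<inter> R j = {}" using regions_disjoint N1 by blast
  have "(L2s (OpA Y v A x) F)^2 = (\<Sum>t\<in>F. (cmod (OpA Y v A x t))^2)" by (simp add: L2_set_sq)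
  also have "\<dots> \<le> (\<Sum>n\<in>N. (L2s (B n x) (R n))^2)"
    unfolding N_def by (rule OpA_partial_sum[OF F])
  also have "\<dots> \<le> (\<Sum>n\<in>N. (M * L2s x (R n))^2)"
    by (rule sum_mono, rule power_mono) (use block_op_norm N1 in auto)
  also have "\<dots> = M^2 * (\<Sum>n\<in>N. \<Sum>t\<in>R n. (cmod (x t))^2)"
    by (simp add: power_mult_distrib L2_set_sq sum_distrib_left)
  also have "(\<Sum>n\<in>N. \<Sum>t\<in>R n. (cmod (x t))^2) = (L2s x (\<Union>n\<in>N. R n))^2"
    unfolding L2_set_sq
    by (rule sum.UNION_disjoint[OF N, symmetric]) (use djN finite_block_region N1 in auto)
  also have "\<dots> \<le> (l2norm x)^2"
    by (rule power_mono[OF l2_fin_le[OF x]]) (use N finite_block_region N1 in auto)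
  finally have "(L2s (OpA Y v A x) F)^2 \<le> (M * l2norm x)^2"
    using M0 by (simp add: power_mult_distrib mult_left_mono)
  then show "L2s (OpA Y v A x) F \<le> M * l2norm x"
    by (rule power2_le_imp_le) (use M0 l2norm_nonneg[of x] in simp)
qed

lemma OpA_minus_block:
  assumes k: "k \<ge> 1"
  shows "OpA Y v A x p - B k x p = OpA Y v A (proj (other_regions Y v k) x) p"
proof (cases "p \<in> R k")
  case True
  have "B k (proj (other_regions Y v k) x) = (\<lambda>t. 0)"
  proof (rule block_op_zero[OF k])
    fix s assume s: "s \<in> R k"
    then have "s \<notin> other_regions Y v k" using regions_disjoint k by (auto simp: other_regions_def)
    then show "proj (other_regions Y v k) x s = 0" by (simp add: proj_def)
  qed
  then show ?thesis using OpA_at[OF k True] by simp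
next
  case False
  have b0: "B k x p = 0" using block_op_supp[OF k False] .
  show ?thesis
  proof (cases "\<exists>n. n \<ge> 1 \<and> p \<in> R n")
    case True
    then obtain n where n: "n \<ge> 1" "p \<in> R n" by blast
    have "n \<noteq> k" using n False by blast
    then have sub: "R n \<subseteq> other_regions Y v k" using n by (auto simp: other_regions_def)
    have "B n (proj (other_regions Y v k) x) = B n x"
      by (rule block_op_local[OF n(1)]) (use sub in \<open>auto simp: proj_def\<close>)
    then show ?thesis using OpA_at[OF n] b0 by simp
  next
    case False
    then show ?thesis using OpA_out b0 by auto
  qed
qed

lemma conj_decomp:
  assumes k: "k \<ge> 1" and g: "g = v k + \<eta> + w"
  shows "(\<lambda>t. (Rsh (- g) \<circ> OpA Y v A \<circ> Rsh g) u t
            - (Rsh (- w) \<circ> Rsh (- \<eta>) \<circ> A k \<circ> proj (Y k) \<circ> Rsh \<eta> \<circ> Rsh w) u t)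
         = Rsh (- g) (OpA Y v A (proj (other_regions Y v k) (Rsh g u)))"
proof
  fix t
  have e1: "Rsh (- v k) (Rsh g u) = Rsh \<eta> (Rsh w u)"
    by (simp add: Rsh_Rsh g add.assoc[symmetric])
  have e2: "t + - g + v k = t + - w + - \<eta>"
    unfolding g by (simp only: minus_add add.assoc minus_add_cancel add.right_neutral left_minus)
  have "(Rsh (- w) \<circ> Rsh (- \<eta>) \<circ> A k \<circ> proj (Y k) \<circ> Rsh \<eta> \<circ> Rsh w) u t = B k (Rsh g u) (t + - g)"
    by (simp only: block_op_def o_apply e1) (simp only: Rsh_def e2)
  moreover have "(Rsh (- g) \<circ> OpA Y v A \<circ> Rsh g) u t = OpA Y v A (Rsh g u) (t + - g)"
    by (simp add: Rsh_def)
  ultimately show "(Rsh (- g) \<circ> OpA Y v A \<circ> Rsh g) u t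
            - (Rsh (- w) \<circ> Rsh (- \<eta>) \<circ> A k \<circ> proj (Y k) \<circ> Rsh \<eta> \<circ> Rsh w) u t
         = Rsh (- g) (OpA Y v A (proj (other_regions Y v k) (Rsh g u))) t"
    using OpA_minus_block[OF k, of "Rsh g u" "t + - g"] by (simp add: Rsh_def)
qed

lemma conj_decomp_bound:
  assumes k: "k \<ge> 1" and g: "g = v k + \<eta> + w" and u: "u \<in> L2"
  defines "D \<equiv> (\<lambda>t. (Rsh (- g) \<circ> OpA Y v A \<circ> Rsh g) u t
            - (Rsh (- w) \<circ> Rsh (- \<eta>) \<circ> A k \<circ> proj (Y k) \<circ> Rsh \<eta> \<circ> Rsh w) u t)"
  shows "D \<in> L2 \<and> l2norm D \<le> M * l2norm (proj {s. s + - g \<in> other_regions Y v k} u)"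
proof -
  let ?G = "{s. s + - g \<in> other_regions Y v k}"
  have pe: "proj (other_regions Y v k) (Rsh g u) = Rsh g (proj ?G u)"
    by (auto simp: proj_def Rsh_def add.assoc)
  have pL: "proj ?G u \<in> L2" using l2_proj[OF u] by blast
  have rL: "Rsh g (proj ?G u) \<in> L2" using l2_Rsh[OF pL] by blast
  have ob: "OpA Y v A (Rsh g (proj ?G u)) \<in> L2 \<and> l2norm (OpA Y v A (Rsh g (proj ?G u))) \<le> M * l2norm (Rsh g (proj ?G u))"
    by (rule OpA_bound[OF rL])
  have D: "D = Rsh (- g) (OpA Y v A (Rsh g (proj ?G u)))"
    unfolding D_def conj_decomp[OF k g] pe ..
  show ?thesis
    using ob l2_Rsh[of _ "- g"] l2_Rsh_eq[of _ "- g"] l2_Rsh_eq[OF pL, of g] unfolding D by auto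
qed

lemma conj_remainder_tendsto_zero:
  fixes g \<eta> :: "nat \<Rightarrow> 'g" and k :: "nat \<Rightarrow> nat"
  assumes k: "\<And>j. k j \<ge> 1" and g: "\<And>j. g j = v (k j) + \<eta> j + w" and u: "u \<in> L2"
    and escape: "\<And>t. \<forall>\<^sub>F j in sequentially. t + - g j \<notin> other_regions Y v (k j)"
  shows "(\<lambda>j. l2norm (\<lambda>t. (Rsh (- g j) \<circ> OpA Y v A \<circ> Rsh (g j)) u t
     - (Rsh (- w) \<circ> Rsh (- \<eta> j) \<circ> A (k j) \<circ> proj (Y (k j)) \<circ> Rsh (\<eta> j) \<circ> Rsh w) u t)) \<longlonglongrightarrow> 0"
proof -
  define G where "G j = {s. s + - g j \<in> other_regions Y v (k j)}" for j
  have "(\<lambda>j. M * l2norm (proj (G j) u)) \<longlonglongrightarrow> M * 0"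
    by (intro tendsto_mult_left proj_escaping_tendsto_zero[OF u]) (use escape in \<open>simp add: G_def\<close>)
  then have bound: "(\<lambda>j. M * l2norm (proj (G j) u)) \<longlonglongrightarrow> 0" by simp
  show ?thesis
    by (rule tendsto_sandwich[OF _ _ tendsto_const bound])
       (use conj_decomp_bound[OF k g u] in \<open>simp_all add: l2norm_nonneg G_def\<close>)
qed

(* Strong limit of the conjugated k_j-th blocks: the conjugated full operator converges to
   Bfull, its part P to Lpart, and the remaining blocks vanish in the limit. *)
lemma block_strong_limit:
  fixes g \<eta> :: "nat \<Rightarrow> 'g" and k :: "nat \<Rightarrow> nat"
  assumes full: "strong_lim (\<lambda>j. Rsh (- g j) \<circ> op_plus (OpA Y v A) P \<circ> Rsh (g j)) Bfull"
    and part: "strong_lim (\<lambda>j. Rsh (- g j) \<circ> P \<circ> Rsh (g j)) Lpart"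
    and P_L2: "\<And>u. u \<in> L2 \<Longrightarrow> P u \<in> L2" and Lpart_L2: "\<And>u. u \<in> L2 \<Longrightarrow> Lpart u \<in> L2"
    and k: "\<And>j. k j \<ge> 1" and g: "\<And>j. g j = v (k j) + \<eta> j + w"
    and escape: "\<And>t. \<forall>\<^sub>F j in sequentially. t + - g j \<notin> other_regions Y v (k j)"
  shows "strong_lim (\<lambda>j. Rsh (- w) \<circ> Rsh (- \<eta> j) \<circ> A (k j) \<circ> proj (Y (k j)) \<circ> Rsh (\<eta> j) \<circ> Rsh w)
           (\<lambda>u t. Bfull u t - Lpart u t)"
  unfolding strong_lim_def
proof
  fix u :: "'g vec" assume u: "u \<in> L2"
  define X where "X j = Rsh (- w) \<circ> Rsh (- \<eta> j) \<circ> A (k j) \<circ> proj (Y (k j)) \<circ> Rsh (\<eta> j) \<circ> Rsh w" for j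
  define a where "a j = (\<lambda>t. (Rsh (- g j) \<circ> op_plus (OpA Y v A) P \<circ> Rsh (g j)) u t - Bfull u t)" for j
  define b where "b j = (\<lambda>t. (Rsh (- g j) \<circ> P \<circ> Rsh (g j)) u t - Lpart u t)" for j
  define c where "c j = (\<lambda>t. (Rsh (- g j) \<circ> OpA Y v A \<circ> Rsh (g j)) u t - X j u t)" for j
  have split: "(\<lambda>t. X j u t - (Bfull u t - Lpart u t)) = (\<lambda>t. a j t - b j t - c j t)" for j
    unfolding a_def b_def c_def by (rule ext) (simp add: op_plus_def Rsh_def)
  have b_L2: "b j \<in> L2" for j
  proof -
    have "Rsh (g j) u \<in> L2" using l2_Rsh[OF u] by blast
    then have "(Rsh (- g j) \<circ> P \<circ> Rsh (g j)) u \<in> L2" using l2_Rsh[OF P_L2] by simp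
    then show ?thesis unfolding b_def using l2_diff Lpart_L2[OF u] by blast
  qed
  have "(\<lambda>j. l2norm (\<lambda>t. a j t - b j t - c j t)) \<longlonglongrightarrow> 0"
  proof (rule l2_diff3_tendsto_zero[OF b_L2])
    show "c j \<in> L2" for j unfolding c_def X_def using conj_decomp_bound[OF k g u] by blast
    show "(\<lambda>j. l2norm (a j)) \<longlonglongrightarrow> 0" using full u unfolding strong_lim_def a_def by blast
    show "(\<lambda>j. l2norm (b j)) \<longlonglongrightarrow> 0" using part u unfolding strong_lim_def b_def by blast
    show "(\<lambda>j. l2norm (c j)) \<longlonglongrightarrow> 0"
      unfolding c_def X_def by (rule conj_remainder_tendsto_zero[OF k g u escape])
  qed
  then show "(\<lambda>j. l2norm (\<lambda>t. (Rsh (- w) \<circ> Rsh (- \<eta> j) \<circ> A (k j) \<circ> proj (Y (k j)) \<circ> Rsh (\<eta> j) \<circ> Rsh w) u t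
                   - (Bfull u t - Lpart u t))) \<longlonglongrightarrow> 0"
    unfolding split[symmetric] X_def .
qed

end

lemma proj_conj:
  fixes g :: "'g::group_add"
  shows "(Rsh (- g) \<circ> proj X \<circ> Rsh g) u = proj {t. t + - g \<in> X} u"
  by (auto simp: Rsh_def proj_def add.assoc)

(* Tychonoff: a sequence of [0,1]-valued functions on a countable set has a pointwise
   convergent subsequence. *)
lemma pointwise_convergent_subseq:
  fixes f :: "nat \<Rightarrow> 'g::countable \<Rightarrow> real"
  assumes bounded: "\<And>n t. f n t \<in> {0..1}"
  shows "\<exists>r l. strict_mono r \<and> (\<forall>t. (\<lambda>j. f (r j) t) \<longlonglongrightarrow> l t)"
proof -
  have "compact (PiE UNIV (\<lambda>_::'g. {0..1::real}))"
    using compactin_PiE[of "\<lambda>_. euclideanreal" UNIV "\<lambda>_. {0..1::real}"]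
    by (simp add: euclidean_product_topology)
  then have "seq_compact (PiE UNIV (\<lambda>_::'g. {0..1::real}))"
    by (rule compact_imp_seq_compact)
  moreover have "\<forall>n. f n \<in> PiE UNIV (\<lambda>_::'g. {0..1::real})" using bounded by auto
  ultimately obtain l r where r: "strict_mono r" and lim: "(f \<circ> r) \<longlonglongrightarrow> l"
    unfolding seq_compact_def by metis
  have "(\<lambda>j. f (r j) t) \<longlonglongrightarrow> l t" for t
  proof -
    have "continuous_on UNIV (\<lambda>x::'g\<Rightarrow>real. x t)" by simp
    then show ?thesis
      using lim continuous_on_tendsto_compose[of UNIV "\<lambda>x::'g\<Rightarrow>real. x t" "f \<circ> r" l sequentially]
      by (simp add: o_def)
  qed
  with r show ?thesis by blast
qed

lemma indicator_subseq:
  fixes P :: "nat \<Rightarrow> 'g::countable \<Rightarrow> bool"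
  shows "\<exists>r E. strict_mono r \<and> (\<forall>t. \<forall>\<^sub>F j in sequentially. P (r j) t = (t \<in> E))"
proof -
  define f where "f n = (\<lambda>t. if P n t then 1 else (0::real))" for n
  have "\<exists>r l. strict_mono r \<and> (\<forall>t. (\<lambda>j. f (r j) t) \<longlonglongrightarrow> l t)"
    by (rule pointwise_convergent_subseq) (simp add: f_def)
  then obtain r l where r: "strict_mono r" and lim: "\<And>t. (\<lambda>j. f (r j) t) \<longlonglongrightarrow> l t"
    by blast
  \<comment> \<open>a 0/1-valued sequence converging to l t is eventually constant, equal to [l t > 1/2]\<close>
  have "\<forall>\<^sub>F j in sequentially. P (r j) t = (l t > 1/2)" for t
  proof -
    have "\<forall>\<^sub>F j in sequentially. dist (f (r j) t) (l t) < 1/2"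
      using lim[of t] unfolding tendsto_iff by (meson divide_pos_pos zero_less_one zero_less_numeral)
    then show ?thesis
    proof (rule eventually_mono)
      fix j assume "dist (f (r j) t) (l t) < 1/2"
      then have "- (1/2) < f (r j) t - l t" "f (r j) t - l t < 1/2"
        unfolding dist_real_def abs_less_iff by linarith+
      then show "P (r j) t = (l t > 1/2)" by (cases "P (r j) t") (simp_all add: f_def)
    qed
  qed
  with r show ?thesis by (intro exI[of _ r] exI[of _ "{t. l t > 1/2}"]) auto
qed

lemma proj_limit_operator_subseq:
  fixes g :: "nat \<Rightarrow> 'g::{group_add,countable}"
  shows "\<exists>r E. strict_mono r \<and> limop (proj X) (\<lambda>j. g (r j)) (proj E)"
proof -
  obtain r E where r: "strict_mono r"
    and rE: "\<And>t. \<forall>\<^sub>F j in sequentially. (t + - g (r j) \<in> X) = (t \<in> E)"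
    using indicator_subseq[of "\<lambda>j t. t + - g j \<in> X"] by blast
  have conv: "(\<lambda>j. l2norm (\<lambda>t. (Rsh (- g (r j)) \<circ> proj X \<circ> Rsh (g (r j))) u t - proj E u t)) \<longlonglongrightarrow> 0"
    if u: "u \<in> L2" for u
    unfolding proj_conj
  proof (rule l2_dom_conv[OF u])
    fix j t show "cmod (proj {s. s + - g (r j) \<in> X} u t - proj E u t) \<le> cmod (u t)"
      by (auto simp: proj_def)
  next
    fix t show "\<forall>\<^sub>F j in sequentially. proj {s. s + - g (r j) \<in> X} u t - proj E u t = 0"
      using rE[of t] by (rule eventually_mono) (auto simp: proj_def)
  qed
  have "limop (proj X) (\<lambda>j. g (r j)) (proj E)"
    unfolding limop_def strong_lim_def
  proof (intro conjI ballI)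
    fix u :: "'g vec" assume u: "u \<in> L2"
    show "(\<lambda>j. l2norm (\<lambda>t. (Rsh (- g (r j)) \<circ> proj X \<circ> Rsh (g (r j))) u t - proj E u t)) \<longlonglongrightarrow> 0"
      by (rule conv[OF u])
    have "(Rsh (- g (r j)) \<circ> adj (proj X) \<circ> Rsh (g (r j))) u
        = (Rsh (- g (r j)) \<circ> proj X \<circ> Rsh (g (r j))) u" for j
      using adj_proj[of "Rsh (g (r j)) u"] l2_Rsh[OF u] by simp
    then show "(\<lambda>j. l2norm (\<lambda>t. (Rsh (- g (r j)) \<circ> adj (proj X) \<circ> Rsh (g (r j))) u t
                                - adj (proj E) u t)) \<longlonglongrightarrow> 0"
      using conv[OF u] adj_proj[OF u] by simp
  qed
  with r show ?thesis by blast
qed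

lemma unbounded_choice_strict_mono:
  fixes P :: "nat \<Rightarrow> nat \<Rightarrow> 'a \<Rightarrow> bool"
  assumes ex: "\<And>N K. \<exists>n k x. N < n \<and> K < k \<and> P n k x"
  shows "\<exists>(nj :: nat \<Rightarrow> nat) (kj :: nat \<Rightarrow> nat) (xj :: nat \<Rightarrow> 'a). strict_mono nj \<and> strict_mono kj \<and>
           (\<forall>j. 0 < nj j \<and> 0 < kj j \<and> P (nj j) (kj j) (xj j))"
proof -
  define Q where "Q N K t \<longleftrightarrow> N < fst t \<and> K < fst (snd t) \<and> P (fst t) (fst (snd t)) (snd (snd t))"
    for N K and t :: "nat \<times> nat \<times> 'a"
  define next_after where "next_after N K = (SOME t. Q N K t)" for N K
  have next_after: "Q N K (next_after N K)" for N K
    unfolding next_after_def by (rule someI_ex) (use ex[of N K] in \<open>auto simp: Q_def\<close>)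
  define sq where "sq = rec_nat (next_after 0 0) (\<lambda>_ p. next_after (fst p) (fst (snd p)))"
  have step: "Q (fst (sq j)) (fst (snd (sq j))) (sq (Suc j))" for j
    using next_after by (simp add: sq_def)
  have every: "\<exists>N K. Q N K (sq j)" for j
    using next_after step by (cases j) (auto simp: sq_def)
  have "strict_mono (\<lambda>j. fst (sq j)) \<and> strict_mono (\<lambda>j. fst (snd (sq j))) \<and>
      (\<forall>j. 0 < fst (sq j) \<and> 0 < fst (snd (sq j)) \<and> P (fst (sq j)) (fst (snd (sq j))) (snd (snd (sq j))))"
  proof (intro conjI allI)
    show "strict_mono (\<lambda>j. fst (sq j))" "strict_mono (\<lambda>j. fst (snd (sq j)))"
      unfolding strict_mono_Suc_iff using step by (auto simp: Q_def)
  qed (use every in \<open>auto simp: Q_def dest: gr_implies_not0\<close>)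
  then show ?thesis by (intro exI)
qed

lemma subsequence_through_translates:
  fixes h :: "nat \<Rightarrow> 'g::group_add" and Q :: "nat \<Rightarrow> 'g set"
  assumes fin: "\<And>k. k \<ge> 1 \<Longrightarrow> finite (Q k)" and inf: "tends_to_inf h" and W: "finite W"
    and hits: "infinite {n. \<exists>k\<ge>1. \<exists>\<eta>\<in>Q k. \<exists>w\<in>W. h n = v k + \<eta> + w}"
  shows "\<exists>(nj :: nat \<Rightarrow> nat) (kj :: nat \<Rightarrow> nat) \<eta> w. strict_mono nj \<and> (\<forall>j. nj j \<ge> 1) \<and> strict_mono kj \<and> (\<forall>j. kj j \<ge> 1)
           \<and> (\<forall>j. \<eta> j \<in> Q (kj j)) \<and> (\<forall>j. h (nj j) = v (kj j) + \<eta> j + w)"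
proof -
  define hits_w where "hits_w w = {n. \<exists>k\<ge>1. \<exists>\<eta>\<in>Q k. h n = v k + \<eta> + w}" for w
  \<comment> \<open>pigeonhole: one translate w is hit infinitely often\<close>
  have "\<exists>w\<in>W. infinite (hits_w w)"
  proof (rule ccontr)
    assume "\<not> (\<exists>w\<in>W. infinite (hits_w w))"
    then have "finite (\<Union>w\<in>W. hits_w w)" using W by auto
    moreover have "{n. \<exists>k\<ge>1. \<exists>\<eta>\<in>Q k. \<exists>w\<in>W. h n = v k + \<eta> + w} \<subseteq> (\<Union>w\<in>W. hits_w w)"
      by (auto simp: hits_w_def)
    ultimately show False using hits finite_subset by blast
  qed
  then obtain w where w: "infinite (hits_w w)" by blast
  \<comment> \<open>since h tends to infinity, the hits at w involve arbitrarily large blocks\<close>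
  have "\<exists>n k \<eta>. N < n \<and> K < k \<and> \<eta> \<in> Q k \<and> h n = v k + \<eta> + w" for N K
  proof -
    define early where "early = (\<Union>k\<in>{1..K}. (\<lambda>\<eta>. v k + \<eta> + w) ` Q k)"
    have "finite early" unfolding early_def using fin by auto
    then obtain N' where N': "\<And>n. n \<ge> N' \<Longrightarrow> h n \<notin> early"
      using inf unfolding tends_to_inf_def eventually_sequentially by blast
    obtain n where n: "n > max N N'" "n \<in> hits_w w"
      using w unfolding infinite_nat_iff_unbounded by blast
    then obtain k \<eta> where k: "k \<ge> 1" "\<eta> \<in> Q k" "h n = v k + \<eta> + w" by (auto simp: hits_w_def)
    have "\<not> k \<le> K" using N'[of n] n k unfolding early_def by force
    then show ?thesis using n k by (intro exI[of _ n] exI[of _ k] exI[of _ \<eta>]) auto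
  qed
  from unbounded_choice_strict_mono[of "\<lambda>n k \<eta>. \<eta> \<in> Q k \<and> h n = v k + \<eta> + w", OF this]
  show ?thesis by (metis Suc_leI One_nat_def)
qed

lemma setmul_I: "a \<in> X \<Longrightarrow> b \<in> Z \<Longrightarrow> a + b \<in> setmul X Z"
  unfolding setmul_def by blast

lemma zero_OmegaN: "0 \<in> OmegaN \<Omega> n"
  unfolding OmegaN_def by (rule CollectI, rule exI[of _ "[]"]) auto

lemma finite_OmegaN: "finite \<Omega> \<Longrightarrow> finite (OmegaN \<Omega> r)"
proof -
  assume "finite \<Omega>"
  moreover have "OmegaN \<Omega> r = sum_list ` {xs. set xs \<subseteq> \<Omega> \<and> length xs \<le> r}"
    unfolding OmegaN_def by blast
  ultimately show ?thesis by (simp add: finite_lists_length_le)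
qed

lemma Zset_sum:
  assumes "x \<in> Y n \<union> OmegaN \<Omega> n" and "y \<in> Y n \<union> OmegaN \<Omega> n"
  shows "x + y \<in> Zset \<Omega> Y n"
proof -
  have "- 0 \<in> setinv (Y n \<union> OmegaN \<Omega> n)" unfolding setinv_def using zero_OmegaN by blast
  then have "x + - 0 + y \<in> Zset \<Omega> Y n"
    unfolding Zset_def Let_def by (intro setmul_I) (use assms in auto)
  then show ?thesis by simp
qed

(* Each block region lies in Z_n v_n^{-1}, so inflating sequences give disjoint regions. *)
lemma block_region_sub_Zset: "block_region Y v n \<subseteq> setmul (Zset \<Omega> Y n) {- v n}"
proof
  fix x assume "x \<in> block_region Y v n"
  then have "(x + v n) + 0 \<in> Zset \<Omega> Y n"
    by (intro Zset_sum) (auto simp: block_region_def zero_OmegaN)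
  then have "(x + v n) + - v n \<in> setmul (Zset \<Omega> Y n) {- v n}" by (intro setmul_I) auto
  then show "x \<in> setmul (Zset \<Omega> Y n) {- v n}" by (simp add: add.assoc)
qed

lemma inflating_blocks_disjoint:
  assumes v_infl: "\<forall>m\<ge>1. \<forall>n\<ge>1. m \<noteq> n \<longrightarrow>
                   setmul (Zset \<Omega> Y m) {- v m} \<inter> setmul (Zset \<Omega> Y n) {- v n} = {}"
  shows "\<And>m n. m \<ge> 1 \<Longrightarrow> n \<ge> 1 \<Longrightarrow> m \<noteq> n \<Longrightarrow> block_region Y v m \<inter> block_region Y v n = {}"
  using v_infl block_region_sub_Zset by blast

(* The key geometric step: since w lies in Omega_{k_j} for large j and v is inflating,
   every point t eventually lies outside the other regions conjugated by v_{k_j} eta_j w. *)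
lemma other_regions_escape:
  fixes \<Omega> :: "'g::group_add set"
  assumes Om_gen: "\<forall>g. \<exists>xs. set xs \<subseteq> \<Omega> \<and> sum_list xs = g"
    and v_infl: "\<forall>m\<ge>1. \<forall>n\<ge>1. m \<noteq> n \<longrightarrow>
                   setmul (Zset \<Omega> Y m) {- v m} \<inter> setmul (Zset \<Omega> Y n) {- v n} = {}"
    and k: "strict_mono k" "\<And>j. k j \<ge> 1" and \<eta>: "\<And>j. - \<eta> j \<in> Y (k j)"
  shows "\<forall>\<^sub>F j in sequentially. t + - (v (k j) + \<eta> j + w) \<notin> other_regions Y v (k j)"
proof -
  obtain xs where xs: "set xs \<subseteq> \<Omega>" "sum_list xs = t + - w" using Om_gen by blast
  show ?thesis
    using eventually_ge_at_top[of "length xs"]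
  proof (rule eventually_mono)
    fix j assume "length xs \<le> j"
    with seq_suble[OF k(1), of j] have "t + - w \<in> OmegaN \<Omega> (k j)"
      unfolding OmegaN_def using xs by (intro CollectI exI[of _ xs]) auto
    then have "(t + - w) + - \<eta> j \<in> Zset \<Omega> Y (k j)" using \<eta> by (intro Zset_sum) auto
    then have "(t + - w) + - \<eta> j + - v (k j) \<in> setmul (Zset \<Omega> Y (k j)) {- v (k j)}"
      by (intro setmul_I) auto
    moreover have "t + - (v (k j) + \<eta> j + w) = (t + - w) + - \<eta> j + - v (k j)"
      by (simp only: minus_add add.assoc)
    ultimately show "t + - (v (k j) + \<eta> j + w) \<notin> other_regions Y v (k j)"
      using v_infl k(2) block_region_sub_Zset unfolding other_regions_def by fastforce
  qed
qed

lemma boundary_subsequence: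
  fixes h :: "nat \<Rightarrow> 'g::group_add"
  assumes Om_fin: "finite \<Omega>" and Y_fin: "\<forall>n\<ge>1. finite (Y n)" and h_inf: "tends_to_inf h"
    and h_bd: "infinite {n. \<exists>k\<ge>1. h n \<in> setmul (setmul {v k} (setinv (bd_Om \<Omega> (Y k)))) (OmegaN \<Omega> r)}"
  shows "\<exists>(nj :: nat \<Rightarrow> nat) (kj :: nat \<Rightarrow> nat) \<eta> w. strict_mono nj \<and> (\<forall>j. nj j \<ge> 1)
           \<and> strict_mono kj \<and> (\<forall>j. kj j \<ge> 1) \<and> (\<forall>j. \<eta> j \<in> setinv (bd_Om \<Omega> (Y (kj j))))
           \<and> (\<forall>j. h (nj j) = v (kj j) + \<eta> j + w)"
proof (rule subsequence_through_translates[OF _ h_inf finite_OmegaN[OF Om_fin]])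
  show "finite (setinv (bd_Om \<Omega> (Y k)))" if "k \<ge> 1" for k
    using Y_fin that finite_subset[of "bd_Om \<Omega> (Y k)" "Y k"]
    by (auto simp: bd_Om_def setinv_def)
  show "infinite {n. \<exists>k\<ge>1. \<exists>\<eta>\<in>setinv (bd_Om \<Omega> (Y k)). \<exists>w\<in>OmegaN \<Omega> r. h n = v k + \<eta> + w}"
  proof -
    have "{n. \<exists>k\<ge>1. h n \<in> setmul (setmul {v k} (setinv (bd_Om \<Omega> (Y k)))) (OmegaN \<Omega> r)}
        = {n. \<exists>k\<ge>1. \<exists>\<eta>\<in>setinv (bd_Om \<Omega> (Y k)). \<exists>w\<in>OmegaN \<Omega> r. h n = v k + \<eta> + w}"
      unfolding setmul_def by blast
    with h_bd show ?thesis by simp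
  qed
qed
theorem mainTheorem7:
  fixes \<Omega> :: "('g::{group_add,countable}) set"
    and Y :: "nat \<Rightarrow> 'g set" and v :: "nat \<Rightarrow> 'g"
    and A :: "nat \<Rightarrow> 'g op" and h :: "nat \<Rightarrow> 'g" and Bh :: "'g op" and r :: nat
  assumes Om_fin: "finite \<Omega>" and Om_e: "0 \<in> \<Omega>"
    and Om_gen: "\<forall>g. \<exists>xs. set xs \<subseteq> \<Omega> \<and> sum_list xs = g"
    and Y_fin: "\<forall>n\<ge>1. finite (Y n)"
    and Y_inc: "\<forall>n\<ge>1. Y n \<subseteq> Y (Suc n)"
    and Y_union: "(\<Union>n\<in>{1..}. Y n) = UNIV"
    and v_infl: "\<forall>m\<ge>1. \<forall>n\<ge>1. m \<noteq> n \<longrightarrow>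
                   setmul (Zset \<Omega> Y m) {- v m} \<inter> setmul (Zset \<Omega> Y n) {- v n} = {}"
    and A_in: "A \<in> SY Y"
    and h_inf: "tends_to_inf h"
    and h_lim: "limop (op_plus (OpA Y v A) (proj (Gamma' Y v))) h Bh"
    and h_bd: "infinite {n. \<exists>k\<ge>1. h n \<in> setmul (setmul {v k} (setinv (bd_Om \<Omega> (Y k)))) (OmegaN \<Omega> r)}"
  shows "\<exists>nj kj \<eta> w S Lg.
           strict_mono nj \<and> (\<forall>j. nj j \<ge> 1) \<and>
           strict_mono kj \<and> (\<forall>j. kj j \<ge> 1) \<and>
           (\<forall>j. \<eta> j \<in> setinv (bd_Om \<Omega> (Y (kj j)))) \<and>
           (\<forall>j. h (nj j) = v (kj j) + \<eta> j + w) \<and>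
           limop (proj (Gamma' Y v)) (\<lambda>j. h (nj j)) Lg \<and>
           strong_lim (\<lambda>j. Rsh (- w) \<circ> Rsh (- \<eta> j) \<circ> A (kj j) \<circ> proj (Y (kj j))
                            \<circ> Rsh (\<eta> j) \<circ> Rsh w) S \<and>
           (\<forall>u\<in>L2. Bh u = (\<lambda>t. S u t + Lg u t))"
proof -
  \<comment> \<open>Op(A) is an orthogonal sum of uniformly bounded blocks on disjoint regions\<close>
  obtain M where M: "M \<ge> 0" "\<forall>n\<ge>1. window_op (Y n) M (A n)"
    using SY_window_op[OF Y_fin A_in] by blast
  interpret blocks: block_setting Y v A M
    using Y_fin inflating_blocks_disjoint[OF v_infl] M by unfold_locales auto
  obtain nj kj :: "nat \<Rightarrow> nat" and \<eta> w
    where nj: "strict_mono nj" "\<forall>j. nj j \<ge> 1" and kj: "strict_mono kj" "\<forall>j. kj j \<ge> 1"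
      and \<eta>: "\<forall>j. \<eta> j \<in> setinv (bd_Om \<Omega> (Y (kj j)))" and hj: "\<forall>j. h (nj j) = v (kj j) + \<eta> j + w"
    using boundary_subsequence[OF Om_fin Y_fin h_inf h_bd] by blast
  obtain s E where s: "strict_mono s" and E: "limop (proj (Gamma' Y v)) (\<lambda>j. h (nj (s j))) (proj E)"
    using proj_limit_operator_subseq[where g="\<lambda>j. h (nj j)"] by blast
  have ns: "strict_mono (\<lambda>j. nj (s j))" and ks: "strict_mono (\<lambda>j. kj (s j))"
    using strict_mono_o[OF nj(1) s] strict_mono_o[OF kj(1) s] by (simp_all add: o_def)
  have \<eta>_Y: "- \<eta> j \<in> Y (kj j)" for j
    using \<eta>[rule_format, of j] by (auto simp: setinv_def bd_Om_def)
  have "strong_lim (\<lambda>j. Rsh (- w) \<circ> Rsh (- \<eta> (s j)) \<circ> A (kj (s j)) \<circ> proj (Y (kj (s j)))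
                        \<circ> Rsh (\<eta> (s j)) \<circ> Rsh w) (\<lambda>u t. Bh u t - proj E u t)"
  proof (rule blocks.block_strong_limit)
    show "strong_lim (\<lambda>j. Rsh (- h (nj (s j))) \<circ> op_plus (OpA Y v A) (proj (Gamma' Y v))
                          \<circ> Rsh (h (nj (s j)))) Bh"
      using strong_lim_subseq[OF _ ns] h_lim unfolding limop_def by blast
    show "strong_lim (\<lambda>j. Rsh (- h (nj (s j))) \<circ> proj (Gamma' Y v) \<circ> Rsh (h (nj (s j)))) (proj E)"
      using E unfolding limop_def by blast
    show "\<forall>\<^sub>F j in sequentially. t + - h (nj (s j)) \<notin> other_regions Y v (kj (s j))" for t
      using other_regions_escape[OF Om_gen v_infl ks _ \<eta>_Y, of t w] kj(2) hj by simp
  qed (use l2_proj kj(2) hj in auto)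
  then show ?thesis
    using ns ks nj(2) kj(2) \<eta> hj E
    by (intro exI[of _ "\<lambda>j. nj (s j)"] exI[of _ "\<lambda>j. kj (s j)"] exI[of _ "\<lambda>j. \<eta> (s j)"]
        exI[of _ w] exI[of _ "\<lambda>u t. Bh u t - proj E u t"] exI[of _ "proj E"]) auto
qed

end
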